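(* Let $\alpha,\beta,\gamma>-1$ and $|\delta|<1$. For all integers $0\le k\le n$ and $0\le \ell\le m$, $$\int_{D_y}\int_{D_x}\mathcal{J}_{n,k}(x,y)\,\mathcal{J}_{m,\ell}(x,y)\,W(x,y)\,\mathrm{d}x\,\mathrm{d}y=H_{nk}\,\delta_{k\ell}\,\delta_{nm},$$ where $$W(x,y)=\theta(xy)\,|y|^{\beta+\gamma}(1+y)\Big(1+\frac{x}{y}\Big)\Big(\frac{x-\delta}{y}\Big)(1-y^2)^{\frac{\alpha-1}{2}}\Big(1-\frac{x^2}{y^2}\Big)^{\frac{\gamma-1}{2}}\Big(\frac{x^2-\delta^2}{y^2}\Big)^{\frac{\beta-1}{2}},$$ $\theta$ is the sign function, the integration domain is $D_x=[-|y|,-|\delta|]\cup[|\delta|,|y|]$ (for fixed $y$), $D_y=[-1,-|\delta|]\cup[|\delta|,1]$, and $$H_{nk}=\frac{(1-\delta^2)^{\frac{2k+\alpha+\beta+\gamma+3}{2}}}{1+(-1)^k\delta}\;h_k(\gamma,\beta)\;h_{n-k}(\alpha,2k+\gamma+\beta+1).$$ Here $$h_{n}(a,b)=\begin{cases}\dfrac{2\,\Gamma\big(\frac{n+b+1}{2}\big)\Gamma\big(\frac{n+a+3}{2}\big)\big(\frac n2\big)!}{(n+a+1)\,\Gamma\big(\frac{n+a+b+2}{2}\big)\big(\frac{a+1}{2}\big)_{n/2}^2}, & n\text{ even},\\[3mm] \dfrac{(n+a+b+1)\,\Gamma\big(\frac{n+b+2}{2}\big)\Gamma\big(\frac{n+a+2}{2}\big)\big(\frac{n-1}{2}\big)!}{2\,\Gamma\big(\frac{n+a+b+3}{2}\big)\big(\frac{a+1}{2}\big)_{(n+1)/2}^2},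 & n\text{ odd},\end{cases}$$ with $(a)_j$ the Pochhammer symbol.
   Context: For real $a,b$ and $c$ with $c^2\neq 1$, the (univariate) Big $-1$ Jacobi polynomials are $$J_{n}(x;a,b,c)=\begin{cases}{}_2F_1\!\left(\begin{smallmatrix}-\frac n2,\ \frac{n+a+b+2}{2}\\ \frac{a+1}{2}\end{smallmatrix};\frac{1-x^2}{1-c^2}\right)+\frac{n(1-x)}{(1+c)(a+1)}\,{}_2F_1\!\left(\begin{smallmatrix}1-\frac n2,\ \frac{n+a+b+2}{2}\\ \frac{a+3}{2}\end{smallmatrix};\frac{1-x^2}{1-c^2}\right), & n\text{ even},\\[2mm] {}_2F_1\!\left(\begin{smallmatrix}-\frac{n-1}2,\ \frac{n+a+b+1}{2}\\ \frac{a+1}{2}\end{smallmatrix};\frac{1-x^2}{1-c^2}\right)-\frac{(n+a+b+1)(1-x)}{(1+c)(a+1)}\,{}_2F_1\!\left(\begin{smallmatrix}-\frac{n-1}2,\ \frac{n+a+b+3}{2}\\ \frac{a+3}{2}\end{smallmatrix};\frac{1-x^2}{1-c^2}\right), & n\text{ odd},\end{cases}$$ where ${}_2F_1$ is the Gauss hypergeometric series (terminating here). Let $\rho_k(y)=y^k(1-\delta^2/y^2)^{k/2}$ if $k$ is even and $\rho_k(y)=y^k(1-\delta^2/y^2)^{(k-1)/2}(1+\delta/y)$ if $k$ is odd. The two-variable Big $-1$ Jacobi polynomials are, for $k=0,1,2,\dots$ and $n=k,k+1,\dots$, $$\mathcal{J}_{n,k}(x,y)=J_{n-k}\big(y;\alpha,2k+\beta+\gamma+1,(-1)^k\delta\big)\,\rho_k(y)\,J_k\Big(\frac{x}{y};\gamma,\beta,\frac{\delta}{y}\Big),$$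 a polynomial in $x,y$ (parameters $\alpha,\beta,\gamma$ real, $\delta\neq\pm1$). *)

theory Defs
  imports "HOL-Analysis.Analysis"
begin

text \<open>Gauss hypergeometric series 2F1(a,b;c;z) (used here only in terminating cases).\<close>
definition hyp2F1 :: "real \<Rightarrow> real \<Rightarrow> real \<Rightarrow> real \<Rightarrow> real" where
  "hyp2F1 a b c z =
     (\<Sum>j. pochhammer a j * pochhammer b j / (pochhammer c j * fact j) * z ^ j)"

definition bigJ :: "nat \<Rightarrow> real \<Rightarrow> real \<Rightarrow> real \<Rightarrow> real \<Rightarrow> real" where
  "bigJ n x a b c =
     (let z = (1 - x^2) / (1 - c^2) in
      if even n then
        hyp2F1 (- real n / 2) ((real n + a + b + 2) / 2) ((a + 1) / 2) z
        + real n * (1 - x) / ((1 + c) * (a + 1))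
          * hyp2F1 (1 - real n / 2) ((real n + a + b + 2) / 2) ((a + 3) / 2) z
      else
        hyp2F1 (- (real n - 1) / 2) ((real n + a + b + 1) / 2) ((a + 1) / 2) z
        - (real n + a + b + 1) * (1 - x) / ((1 + c) * (a + 1))
          * hyp2F1 (- (real n - 1) / 2) ((real n + a + b + 3) / 2) ((a + 3) / 2) z)"

definition rho :: "real \<Rightarrow> nat \<Rightarrow> real \<Rightarrow> real" where
  "rho \<delta> k y =
     (if even k then y ^ k * (1 - \<delta>^2 / y^2) ^ (k div 2)
      else y ^ k * (1 - \<delta>^2 / y^2) ^ ((k - 1) div 2) * (1 + \<delta> / y))"

definition bigJ2 :: "real \<Rightarrow> real \<Rightarrow> real \<Rightarrow> real \<Rightarrow> nat \<Rightarrow> nat \<Rightarrow> real \<Rightarrow> real \<Rightarrow> real" where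
  "bigJ2 \<alpha> \<beta> \<gamma> \<delta> n k x y =
     bigJ (n - k) y \<alpha> (2 * real k + \<beta> + \<gamma> + 1) ((-1) ^ k * \<delta>)
     * rho \<delta> k y * bigJ k (x / y) \<gamma> \<beta> (\<delta> / y)"

definition weightW :: "real \<Rightarrow> real \<Rightarrow> real \<Rightarrow> real \<Rightarrow> real \<Rightarrow> real \<Rightarrow> real" where
  "weightW \<alpha> \<beta> \<gamma> \<delta> x y =
     sgn (x * y) * \<bar>y\<bar> powr (\<beta> + \<gamma>) * (1 + y) * (1 + x / y) * ((x - \<delta>) / y)
     * (1 - y^2) powr ((\<alpha> - 1) / 2)
     * (1 - x^2 / y^2) powr ((\<gamma> - 1) / 2)
     * ((x^2 - \<delta>^2) / y^2) powr ((\<beta> - 1) / 2)"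

definition domX :: "real \<Rightarrow> real \<Rightarrow> real set" where
  "domX \<delta> y = {-\<bar>y\<bar>..-\<bar>\<delta>\<bar>} \<union> {\<bar>\<delta>\<bar>..\<bar>y\<bar>}"

definition domY :: "real \<Rightarrow> real set" where
  "domY \<delta> = {-1..-\<bar>\<delta>\<bar>} \<union> {\<bar>\<delta>\<bar>..1}"

definition hnorm :: "nat \<Rightarrow> real \<Rightarrow> real \<Rightarrow> real" where
  "hnorm n a b =
     (if even n then
        2 * Gamma ((real n + b + 1) / 2) * Gamma ((real n + a + 3) / 2) * fact (n div 2)
        / ((real n + a + 1) * Gamma ((real n + a + b + 2) / 2)
           * (pochhammer ((a + 1) / 2) (n div 2))^2)
      else
        (real n + a + b + 1) * Gamma ((real n + b + 2) / 2) * Gamma ((real n + a + 2) / 2)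
        * fact ((n - 1) div 2)
        / (2 * Gamma ((real n + a + b + 3) / 2)
           * (pochhammer ((a + 1) / 2) ((n + 1) div 2))^2))"

definition Hnorm :: "real \<Rightarrow> real \<Rightarrow> real \<Rightarrow> real \<Rightarrow> nat \<Rightarrow> nat \<Rightarrow> real" where
  "Hnorm \<alpha> \<beta> \<gamma> \<delta> n k =
     (1 - \<delta>^2) powr ((2 * real k + \<alpha> + \<beta> + \<gamma> + 3) / 2) / (1 + (-1) ^ k * \<delta>)
     * hnorm k \<gamma> \<beta> * hnorm (n - k) \<alpha> (2 * real k + \<gamma> + \<beta> + 1)"

end

(*
  In z = (1 - x^2) / (1 - c^2) the univariate Big -1 Jacobi polynomial J_n(x; a, b, c) splits as
  R(z) - z Q(z) + (1 - x) Q(z) / (1 + c), where R and Q come from Gauss' contiguous relations and are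
  Jacobi polynomials, orthogonal for the Beta weights with parameters (mu, nu) = ((a+1)/2, (b+1)/2)
  and (mu + 1, nu + 1).  Adding the contributions of x and -x cancels the terms odd in x, and the
  substitution z = (1 - x^2) / (1 - c^2) turns the integral over [-1, -|c|] u [|c|, 1] into these two
  Beta integrals; their orthogonality gives the univariate orthogonality with norm h_n(a, b).
  For the bivariate polynomials, the substitution x = y u reduces the inner integral to the
  univariate case in u with c = delta / y; for k = l the remaining factors in y combine into the
  univariate weight with parameters (alpha, 2k + beta + gamma + 1, (-1)^k delta), and the outer
  integral is again the univariate orthogonality relation.
*)

theory Submission
  imports Defs "HOL-Computational_Algebra.Polynomial"
begin

definition beta_density :: "real \<Rightarrow> real \<Rightarrow> real \<Rightarrow> real" where
  "beta_density A B z = z powr (A - 1) * (1 - z) powr (B - 1)"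

lemma beta_density_measurable [measurable]: "beta_density A B \<in> borel_measurable borel"
  unfolding beta_density_def by measurable

lemma set_integral_beta_density:
  assumes "A > 0" "B > 0"
  shows "set_integrable lborel {0..1} (beta_density A B)"
    and "(LINT z:{0..1}|lborel. beta_density A B z) = Beta A B"
proof -
  have hi: "(beta_density A B has_integral Beta A B) {0..1}"
    using has_integral_Beta_real[OF assms] unfolding beta_density_def .
  then have "beta_density A B absolutely_integrable_on {0..1}"
    by (intro nonnegative_absolutely_integrable_1) (auto simp: beta_density_def)
  then have "integrable lebesgue (\<lambda>z. indicator {0..1} z *\<^sub>R beta_density A B z)"
    by (simp add: set_integrable_def)
  moreover have "(\<lambda>z. indicator {0..1} z *\<^sub>R beta_density A B z) \<in> borel_measurable lborel"
    by measurable
  ultimately show si: "set_integrable lborel {0..1} (beta_density A B)"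
    unfolding set_integrable_def using integrable_completion by blast
  show "(LINT z:{0..1}|lborel. beta_density A B z) = Beta A B"
    using set_borel_integral_eq_integral(2)[OF si] hi by (simp add: integral_unique)
qed

lemma set_integral_sum:
  fixes f :: "'i \<Rightarrow> 'a \<Rightarrow> real"
  assumes "\<And>i. i \<in> I \<Longrightarrow> set_integrable M A (f i)"
  shows "set_integrable M A (\<lambda>x. \<Sum>i\<in>I. f i x)"
    and "(LINT x:A|M. (\<Sum>i\<in>I. f i x)) = (\<Sum>i\<in>I. LINT x:A|M. f i x)"
  using assms unfolding set_integrable_def set_lebesgue_integral_def
  by (simp_all add: sum_distrib_left)

lemma power_mult_beta_density:
  assumes "z \<in> {0..1}"
  shows "z ^ r * beta_density A B z = beta_density (A + real r) B z"
proof (cases "z = 0")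
  case True then show ?thesis by (cases r) (auto simp: beta_density_def)
next
  case False
  with assms have "z > 0" by auto
  then show ?thesis
    by (simp add: beta_density_def powr_realpow[symmetric] powr_add[symmetric] mult.assoc[symmetric]
        algebra_simps)
qed

lemma one_minus_power_mult_beta_density:
  assumes "z \<in> {0..1}"
  shows "(1 - z) ^ q * beta_density A B z = beta_density A (B + real q) z"
proof (cases "z = 1")
  case True then show ?thesis by (cases q) (auto simp: beta_density_def)
next
  case False
  with assms have "1 - z > 0" by auto
  then show ?thesis
    by (simp add: beta_density_def powr_realpow[symmetric] powr_add[symmetric] mult.left_commute
        algebra_simps)
qed

definition beta_integral :: "real \<Rightarrow> real \<Rightarrow> real poly \<Rightarrow> real" where
  "beta_integral A B p = (LINT z:{0..1}|lborel. poly p z * beta_density A B z)"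

lemma set_integrable_poly_beta_density:
  assumes "A > 0" "B > 0"
  shows "set_integrable lborel {0..1} (\<lambda>z. poly p z * beta_density A B z)"
proof -
  have "poly p z * beta_density A B z = (\<Sum>s\<le>degree p. coeff p s * beta_density (A + real s) B z)"
    if "z \<in> {0..1}" for z
    using that by (simp add: poly_altdef sum_distrib_right mult.assoc power_mult_beta_density)
  moreover have "set_integrable lborel {0..1} (\<lambda>z. \<Sum>s\<le>degree p. coeff p s * beta_density (A + real s) B z)"
    using set_integral_beta_density(1)[of "A + real _" B] assms
    by (intro set_integral_sum(1) set_integrable_mult_right) auto
  ultimately show ?thesis
    by (subst set_integrable_cong[OF refl refl]) auto
qed

lemma beta_integral_add:
  "A > 0 \<Longrightarrow> B > 0 \<Longrightarrow> beta_integral A B (p + q) = beta_integral A B p + beta_integral A B q"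
  unfolding beta_integral_def
  using set_integrable_poly_beta_density[of A B p] set_integrable_poly_beta_density[of A B q]
  by (simp add: distrib_right)

lemma beta_integral_0 [simp]: "beta_integral A B 0 = 0"
  by (simp add: beta_integral_def)

lemma beta_integral_smult: "beta_integral A B (smult c p) = c * beta_integral A B p"
  unfolding beta_integral_def by (simp add: mult.assoc)

lemma beta_integral_sum:
  assumes "A > 0" "B > 0"
  shows "beta_integral A B (\<Sum>i\<in>I. f i) = (\<Sum>i\<in>I. beta_integral A B (f i))"
  by (induction I rule: infinite_finite_induct)
     (simp_all add: beta_integral_add[OF assms])

lemma beta_integral_monom_mult:
  "beta_integral A B (monom 1 r * p) = beta_integral (A + real r) B p"
  unfolding beta_integral_def
  by (rule set_lebesgue_integral_cong) (auto simp: poly_monom power_mult_beta_density[symmetric])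

lemma beta_integral_monom:
  assumes "A > 0" "B > 0"
  shows "beta_integral A B (monom c r) = c * Beta (A + real r) B"
  using beta_integral_monom_mult[of A B r "[:c:]"] set_integral_beta_density(2)[of "A + real r" B] assms
  by (simp add: beta_integral_def smult_monom)

lemma beta_integral_one_minus_power_mult:
  "beta_integral A B ([:1, -1:] ^ q * p) = beta_integral A (B + real q) p"
  unfolding beta_integral_def
  by (rule set_lebesgue_integral_cong) (auto simp: one_minus_power_mult_beta_density[symmetric])

lemma alternating_binomial_sum_Suc:
  fixes f :: "nat \<Rightarrow> real"
  shows "(\<Sum>s\<le>Suc j. (-1)^s * real (Suc j choose s) * f s)
       = (\<Sum>s\<le>j. (-1)^s * real (j choose s) * (f s - f (Suc s)))"
proof -
  have "(\<Sum>s\<le>Suc j. (-1)^s * real (Suc j choose s) * f s)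
      = f 0 + (\<Sum>s\<le>j. (-1)^(Suc s) * real (Suc j choose Suc s) * f (Suc s))"
    by (subst sum.atMost_Suc_shift) simp
  also have "\<dots> = f 0 + (\<Sum>s\<le>j. (-1)^(Suc s) * real (j choose Suc s) * f (Suc s))
                 + (\<Sum>s\<le>j. (-1)^(Suc s) * real (j choose s) * f (Suc s))"
  proof -
    have "\<And>s. (-1)^(Suc s) * real (Suc j choose Suc s) * f (Suc s)
        = (-1)^(Suc s) * real (j choose Suc s) * f (Suc s) + (-1)^(Suc s) * real (j choose s) * f (Suc s)"
      by (simp add: algebra_simps)
    then show ?thesis by (simp only: sum.distrib add.assoc)
  qed
  also have "f 0 + (\<Sum>s\<le>j. (-1)^(Suc s) * real (j choose Suc s) * f (Suc s))
            = (\<Sum>s\<le>Suc j. (-1)^s * real (j choose s) * f s)"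
    by (subst sum.atMost_Suc_shift) simp
  also have "\<dots> = (\<Sum>s\<le>j. (-1)^s * real (j choose s) * f s)"
    by simp
  also have "(\<Sum>s\<le>j. (-1)^(Suc s) * real (j choose s) * f (Suc s))
      = - (\<Sum>s\<le>j. (-1)^s * real (j choose s) * f (Suc s))"
    by (simp add: sum_negf[symmetric])
  also have "(\<Sum>s\<le>j. (-1)^s * real (j choose s) * f s) + - (\<Sum>s\<le>j. (-1)^s * real (j choose s) * f (Suc s))
      = (\<Sum>s\<le>j. (-1)^s * real (j choose s) * (f s - f (Suc s)))"
    by (simp add: sum_subtractf[symmetric] right_diff_distrib)
  finally show ?thesis .
qed

lemma degree_forward_difference_less:
  fixes p :: "real poly"
  assumes "p - p \<circ>\<^sub>p [:1, 1:] \<noteq> 0"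
  shows "degree (p - p \<circ>\<^sub>p [:1, 1:]) < degree p"
proof -
  let ?q = "p - p \<circ>\<^sub>p [:1, 1:]"
  have "degree (p \<circ>\<^sub>p [:1, 1:]) = degree p" and "lead_coeff (p \<circ>\<^sub>p [:1, 1:]) = lead_coeff p"
    by (simp add: degree_pcompose, simp add: lead_coeff_comp)
  then have "degree ?q \<le> degree p" and "coeff ?q (degree p) = 0"
    using degree_diff_le_max[of p "p \<circ>\<^sub>p [:1, 1:]"] by simp_all
  with assms show ?thesis
    by (metis le_neq_implies_less leading_coeff_0_iff)
qed

lemma alternating_binomial_sum_poly:
  fixes p :: "real poly"
  assumes "degree p < j \<or> p = 0"
  shows "(\<Sum>s\<le>j. (-1)^s * real (j choose s) * poly p (real s)) = 0"
  using assms
proof (induction j arbitrary: p)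
  case 0 then show ?case by simp
next
  case (Suc j)
  let ?q = "p - p \<circ>\<^sub>p [:1, 1:]"
  have "(\<Sum>s\<le>Suc j. (-1)^s * real (Suc j choose s) * poly p (real s))
      = (\<Sum>s\<le>j. (-1)^s * real (j choose s) * poly ?q (real s))"
    unfolding alternating_binomial_sum_Suc by (simp add: poly_pcompose add.commute)
  also have "\<dots> = 0"
  proof (cases "?q = 0")
    case False
    then have "degree ?q < degree p" by (rule degree_forward_difference_less)
    with Suc.prems False show ?thesis by (intro Suc.IH) auto
  qed simp
  finally show ?case .
qed

lemma alternating_binomial_sum_inverse:
  fixes t :: real
  assumes "t > 0"
  shows "(\<Sum>s\<le>j. (-1)^s * real (j choose s) * (1 / (t + real s))) = fact j / pochhammer t (Suc j)"
  using assms
proof (induction j arbitrary: t)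
  case (Suc j)
  have "(\<Sum>s\<le>Suc j. (-1)^s * real (Suc j choose s) * (1 / (t + real s)))
      = (\<Sum>s\<le>j. (-1)^s * real (j choose s) * (1 / (t + real s) - 1 / (t + 1 + real s)))"
    by (subst alternating_binomial_sum_Suc) (simp add: add.assoc)
  also have "\<dots> = fact j / pochhammer t (Suc j) - fact j / pochhammer (t + 1) (Suc j)"
    using Suc.IH[of t] Suc.IH[of "t + 1"] Suc.prems by (simp add: sum_subtractf algebra_simps)
  also have "\<dots> = fact (Suc j) / pochhammer t (Suc (Suc j))"
  proof -
    define P where "P = pochhammer (t + 1) j"
    obtain u where u: "t + 1 + real j = u" by simp
    have p: "pochhammer t (Suc j) = t * P" "pochhammer (t + 1) (Suc j) = P * u"
      "pochhammer t (Suc (Suc j)) = t * (P * u)"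
      unfolding P_def u[symmetric] by (simp_all only: pochhammer_rec[of t] pochhammer_Suc[of "t + 1"])
    have "P \<noteq> 0" "t \<noteq> 0" "u \<noteq> 0"
      using Suc.prems u by (auto simp: P_def pochhammer_pos less_imp_neq[symmetric])
    then show ?thesis unfolding p fact_Suc by (simp add: field_simps, simp add: u[symmetric] algebra_simps)
  qed
  finally show ?case .
qed simp

lemma Beta_plus_of_nat_left:
  fixes A B :: real
  assumes "A > 0" "B > 0"
  shows "Beta (A + real n) B = Beta A B * pochhammer A n / pochhammer (A + B) n"
proof (induction n)
  case (Suc n)
  have "A + real n \<notin> \<int>\<^sub>\<le>\<^sub>0" using assms by (auto elim!: nonpos_Ints_cases)
  then have "(A + real n + B) * Beta (A + real n + 1) B = (A + real n) * Beta (A + real n) B"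
    by (rule Beta_plus1_left)
  then have step: "Beta (A + real (Suc n)) B = (A + real n) * Beta (A + real n) B / (A + real n + B)"
    using assms by (simp add: field_simps add_ac)
  have "pochhammer (A + B) n \<noteq> 0" "A + real n + B \<noteq> 0"
    using assms by (simp_all add: pochhammer_pos less_imp_neq[symmetric])
  moreover have "A + B + real n = A + real n + B" by simp
  ultimately show ?case unfolding step Suc.IH pochhammer_Suc by (simp add: field_simps)
qed simp

definition hyp_coeff :: "nat \<Rightarrow> real \<Rightarrow> real \<Rightarrow> nat \<Rightarrow> real" where
  "hyp_coeff j b c s = pochhammer (- real j) s * pochhammer b s / (pochhammer c s * fact s)"

definition hyp_poly :: "nat \<Rightarrow> real \<Rightarrow> real \<Rightarrow> real poly" where
  "hyp_poly j b c = (\<Sum>s\<le>j. monom (hyp_coeff j b c s) s)"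

lemma hyp_coeff_0 [simp]: "hyp_coeff j b c 0 = 1"
  by (simp add: hyp_coeff_def)

lemma hyp_poly_0 [simp]: "hyp_poly 0 b c = 1"
  by (simp add: hyp_poly_def hyp_coeff_def one_pCons)

lemma hyp_coeff_eq_0: "j < s \<Longrightarrow> hyp_coeff j b c s = 0"
  by (auto simp: hyp_coeff_def pochhammer_eq_0_iff)

lemma coeff_hyp_poly: "coeff (hyp_poly j b c) s = hyp_coeff j b c s"
  unfolding hyp_poly_def coeff_sum by (cases "s \<le> j") (auto simp: hyp_coeff_eq_0)

lemma degree_hyp_poly: "degree (hyp_poly j b c) \<le> j"
  by (rule degree_le) (simp add: coeff_hyp_poly hyp_coeff_eq_0)

lemma hyp2F1_eq_poly_hyp_poly: "hyp2F1 (- real j) b c z = poly (hyp_poly j b c) z"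
proof -
  have "hyp2F1 (- real j) b c z = (\<Sum>s\<le>j. hyp_coeff j b c s * z ^ s)"
    unfolding hyp2F1_def hyp_coeff_def[symmetric] by (rule suminf_finite) (auto simp: hyp_coeff_eq_0)
  then show ?thesis by (simp add: hyp_poly_def poly_sum poly_monom)
qed

lemma pochhammer_neg_of_nat_Suc:
  "pochhammer (- real (Suc j)) (Suc t) = - (real j + 1) * pochhammer (- real j) t"
  by (simp add: pochhammer_rec algebra_simps)

lemma hyp_coeff_Suc_Suc:
  assumes "c > 0"
  shows "hyp_coeff (Suc j) b c (Suc t) = - (real j + 1) * b / (c * (real t + 1)) * hyp_coeff j (b + 1) (c + 1) t"
  unfolding hyp_coeff_def pochhammer_neg_of_nat_Suc pochhammer_rec[of b] pochhammer_rec[of c]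
  using assms by (simp add: pochhammer_pos less_imp_neq[symmetric] field_simps)

lemma hyp_coeff_Suc_Suc_upper:
  assumes "c > 0"
  shows "hyp_coeff (Suc j) (b + 1) c (Suc t)
       = - (real j + 1) * (b + 1 + real t) / (c * (real t + 1)) * hyp_coeff j (b + 1) (c + 1) t"
  unfolding hyp_coeff_def pochhammer_neg_of_nat_Suc pochhammer_Suc[of "b + 1"] pochhammer_rec[of c]
  using assms by (simp add: pochhammer_pos less_imp_neq[symmetric] field_simps)

lemma hyp_coeff_Suc:
  assumes "c > 0"
  shows "hyp_coeff j b c (Suc t) = (real t - real j) * b / (c * (real t + 1)) * hyp_coeff j (b + 1) (c + 1) t"
  unfolding hyp_coeff_def pochhammer_Suc[of "- real j"] pochhammer_rec[of b] pochhammer_rec[of c]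
  using assms by (simp add: pochhammer_pos less_imp_neq[symmetric] field_simps)

text \<open>Two of Gauss' contiguous relations, specialised to a = -j.\<close>

lemma hyp_poly_contiguous_upper:
  assumes "c > 0"
  shows "hyp_poly (Suc j) (b + 1) c
       = hyp_poly (Suc j) b c - smult ((real j + 1) / c) (pCons 0 (hyp_poly j (b + 1) (c + 1)))"
proof (rule poly_eqI, cases rule: nat.exhaust)
  fix s t
  assume s: "s = Suc t"
  \<comment> \<open>naming t + 1 keeps field_simps from distributing the common denominator\<close>
  obtain u where u: "real t + 1 = u" and "u > 0" by simp
  with assms have "c \<noteq> 0" "u \<noteq> 0" by simp_all
  then show "coeff (hyp_poly (Suc j) (b + 1) c) s
      = coeff (hyp_poly (Suc j) b c - smult ((real j + 1) / c) (pCons 0 (hyp_poly j (b + 1) (c + 1)))) s"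
    unfolding s coeff_diff coeff_smult coeff_pCons_Suc coeff_hyp_poly
      hyp_coeff_Suc_Suc[OF assms, of j b] hyp_coeff_Suc_Suc_upper[OF assms, of j b] u
    by (simp add: field_simps, simp add: u[symmetric] algebra_simps)
qed (simp add: coeff_hyp_poly)

lemma hyp_poly_contiguous_lower:
  assumes "c > 0"
  shows "hyp_poly j b c = hyp_poly (Suc j) b c + smult (b / c) (pCons 0 (hyp_poly j (b + 1) (c + 1)))"
proof (rule poly_eqI, cases rule: nat.exhaust)
  fix s t
  assume s: "s = Suc t"
  obtain u where u: "real t + 1 = u" and "u > 0" by simp
  with assms have "c \<noteq> 0" "u \<noteq> 0" by simp_all
  then show "coeff (hyp_poly j b c) s
      = coeff (hyp_poly (Suc j) b c + smult (b / c) (pCons 0 (hyp_poly j (b + 1) (c + 1)))) s"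
    unfolding s coeff_add coeff_smult coeff_pCons_Suc coeff_hyp_poly
      hyp_coeff_Suc_Suc[OF assms, of j b] hyp_coeff_Suc[OF assms, of j b] u
    by (simp add: field_simps, simp add: u[symmetric] algebra_simps)
qed (simp add: coeff_hyp_poly)

definition jacobi_poly :: "nat \<Rightarrow> real \<Rightarrow> real \<Rightarrow> real poly" where
  "jacobi_poly j \<mu> \<nu> = hyp_poly j (real j + \<mu> + \<nu> - 1) \<mu>"

lemma jacobi_poly_0 [simp]: "jacobi_poly 0 \<mu> \<nu> = 1"
  by (simp add: jacobi_poly_def)

lemma degree_jacobi_poly: "degree (jacobi_poly j \<mu> \<nu>) \<le> j"
  unfolding jacobi_poly_def by (rule degree_hyp_poly)

lemma pochhammer_neg_of_nat_div_fact: "pochhammer (- real j) s / fact s = (-1)^s * real (j choose s)"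
proof -
  have "(-1)^s * real (j choose s) = (-1)^s * (-1)^s * pochhammer (- real j) s / fact s"
    by (simp add: binomial_gbinomial gbinomial_pochhammer)
  also have "(-1)^s * (-1)^s = (1::real)" by (simp add: power_mult_distrib[symmetric])
  finally show ?thesis by simp
qed

lemma hyp_coeff_eq_binomial:
  "hyp_coeff j b c s = (-1)^s * real (j choose s) * pochhammer b s / pochhammer c s"
  unfolding hyp_coeff_def using pochhammer_neg_of_nat_div_fact[of j s] by (simp add: field_simps)

lemma beta_integral_jacobi_poly:
  assumes "A > 0" "B > 0"
  shows "beta_integral A B (jacobi_poly j \<mu> \<nu>)
       = (\<Sum>s\<le>j. hyp_coeff j (real j + \<mu> + \<nu> - 1) \<mu> s * Beta (A + real s) B)"
  unfolding jacobi_poly_def hyp_poly_def using assms by (simp add: beta_integral_sum beta_integral_monom)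

definition rising_poly :: "real \<Rightarrow> nat \<Rightarrow> real poly" where
  "rising_poly a n = (\<Prod>i<n. [:a + real i, 1:])"

lemma poly_rising_poly: "poly (rising_poly a n) x = pochhammer (a + x) n"
  unfolding rising_poly_def poly_prod pochhammer_prod by (simp add: atLeast0LessThan algebra_simps)

lemma degree_rising_poly: "degree (rising_poly a n) = n"
  unfolding rising_poly_def by (subst degree_prod_sum_eq) auto

lemma rising_poly_nonzero: "rising_poly a n \<noteq> 0"
  using degree_rising_poly[of a n] by (auto simp: rising_poly_def)

text \<open>Each summand is (-1)^s (j choose s) times a polynomial of degree r + (j - 1 - r) < j in s,
  so the alternating sum vanishes.\<close>

lemma jacobi_poly_orthogonal_monom:
  assumes mu: "\<mu> > 0" and nu: "\<nu> > 0" and rj: "r < j"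
  shows "beta_integral \<mu> \<nu> (monom 1 r * jacobi_poly j \<mu> \<nu>) = 0"
proof -
  define A where "A = \<mu> + \<nu> + real r"
  define k where "k = j - 1 - r"
  define C where "C = Beta \<mu> \<nu> / (pochhammer (\<mu> + \<nu>) r * pochhammer A k)"
  define P where "P = rising_poly \<mu> r * rising_poly A k"
  have Apos: "A > 0" using mu nu by (simp add: A_def)
  have jk: "A + real k = real j + \<mu> + \<nu> - 1" using rj by (simp add: A_def k_def of_nat_diff)
  have summand: "hyp_coeff j (real j + \<mu> + \<nu> - 1) \<mu> s * Beta (\<mu> + real r + real s) \<nu>
      = C * ((-1)^s * real (j choose s) * poly P (real s))" for s
  proof -
    have beta: "Beta (\<mu> + real r + real s) \<nu>
        = Beta \<mu> \<nu> * (pochhammer \<mu> s * pochhammer (\<mu> + real s) r) / (pochhammer (\<mu> + \<nu>) r * pochhammer A s)"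
      using Beta_plus_of_nat_left[OF mu nu, of "s + r"] pochhammer_product'[of \<mu> s r]
        pochhammer_product'[of "\<mu> + \<nu>" r s]
      by (simp add: A_def add_ac)
    have "pochhammer A k * pochhammer (A + real k) s = pochhammer A s * pochhammer (A + real s) k"
      using pochhammer_product'[of A s k] pochhammer_product'[of A k s] by (simp add: add.commute)
    then have upper: "pochhammer (real j + \<mu> + \<nu> - 1) s = pochhammer A s * pochhammer (A + real s) k / pochhammer A k"
      unfolding jk[symmetric] using pochhammer_pos[OF Apos, of k] by (simp add: eq_divide_eq mult.commute)
    have P: "poly P (real s) = pochhammer (\<mu> + real s) r * pochhammer (A + real s) k"
      by (simp add: P_def poly_rising_poly)
    have "pochhammer \<mu> s \<noteq> 0" "pochhammer A s \<noteq> 0" "pochhammer A k \<noteq> 0" "pochhammer (\<mu> + \<nu>) r \<noteq> 0"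
      using mu nu Apos by (simp_all add: pochhammer_pos less_imp_neq[symmetric])
    then show ?thesis
      unfolding hyp_coeff_eq_binomial beta upper P C_def by (simp add: field_simps)
  qed
  have "degree P = r + k"
    by (simp add: P_def degree_mult_eq rising_poly_nonzero degree_rising_poly)
  then have degP: "degree P < j" using rj by (simp add: k_def)
  have "beta_integral \<mu> \<nu> (monom 1 r * jacobi_poly j \<mu> \<nu>)
      = (\<Sum>s\<le>j. hyp_coeff j (real j + \<mu> + \<nu> - 1) \<mu> s * Beta (\<mu> + real r + real s) \<nu>)"
    using mu nu by (simp add: beta_integral_monom_mult beta_integral_jacobi_poly)
  also have "\<dots> = C * (\<Sum>s\<le>j. (-1)^s * real (j choose s) * poly P (real s))"
    by (simp add: summand sum_distrib_left)
  also have "\<dots> = 0" using alternating_binomial_sum_poly[of P j] degP by simp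
  finally show ?thesis .
qed

lemma jacobi_poly_orthogonal:
  assumes mu: "\<mu> > 0" and nu: "\<nu> > 0" and p: "degree p < j"
  shows "beta_integral \<mu> \<nu> (p * jacobi_poly j \<mu> \<nu>) = 0"
proof -
  have "p * jacobi_poly j \<mu> \<nu> = (\<Sum>r\<le>degree p. smult (coeff p r) (monom 1 r * jacobi_poly j \<mu> \<nu>))"
    by (subst (1) poly_as_sum_of_monoms[symmetric]) (simp add: sum_distrib_right smult_monom_mult)
  then have "beta_integral \<mu> \<nu> (p * jacobi_poly j \<mu> \<nu>)
      = (\<Sum>r\<le>degree p. coeff p r * beta_integral \<mu> \<nu> (monom 1 r * jacobi_poly j \<mu> \<nu>))"
    using mu nu by (simp add: beta_integral_sum beta_integral_smult)
  also have "\<dots> = 0" using jacobi_poly_orthogonal_monom[OF mu nu] p by (intro sum.neutral) auto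
  finally show ?thesis .
qed

lemma beta_integral_mult_jacobi_poly:
  assumes mu: "\<mu> > 0" and nu: "\<nu> > 0" and p: "degree p \<le> j"
  shows "beta_integral \<mu> \<nu> (p * jacobi_poly j \<mu> \<nu>)
       = coeff p j * beta_integral \<mu> \<nu> (monom 1 j * jacobi_poly j \<mu> \<nu>)"
proof -
  define q where "q = p - monom (coeff p j) j"
  have "degree q \<le> j"
    using p degree_monom_le[of "coeff p j" j] by (simp add: q_def degree_diff_le)
  moreover have "coeff q j = 0" by (simp add: q_def)
  ultimately have "q = 0 \<or> degree q < j"
    by (metis le_neq_implies_less leading_coeff_0_iff)
  then have "beta_integral \<mu> \<nu> (q * jacobi_poly j \<mu> \<nu>) = 0"
    using jacobi_poly_orthogonal[OF mu nu] by auto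
  moreover have "p * jacobi_poly j \<mu> \<nu> = smult (coeff p j) (monom 1 j * jacobi_poly j \<mu> \<nu>) + q * jacobi_poly j \<mu> \<nu>"
    by (simp add: q_def algebra_simps smult_monom_mult)
  ultimately show ?thesis using mu nu by (simp add: beta_integral_add beta_integral_smult)
qed

lemma beta_integral_one_minus_power_mult_jacobi_poly:
  assumes mu: "\<mu> > 0" and nu: "\<nu> > 0" and j: "j \<ge> 1"
  shows "beta_integral \<mu> \<nu> ([:1, -1:]^j * jacobi_poly j \<mu> \<nu>)
       = Beta \<mu> (\<nu> + real j) * fact j / pochhammer (real j + \<mu> + \<nu>) j"
proof -
  define t where "t = real j + \<mu> + \<nu> - 1"
  have tpos: "t > 0" using mu nu j by (simp add: t_def)
  have nuj: "\<nu> + real j > 0" using nu by simp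
  have summand: "hyp_coeff j t \<mu> s * Beta (\<mu> + real s) (\<nu> + real j)
      = Beta \<mu> (\<nu> + real j) * t * ((-1)^s * real (j choose s) / (t + real s))" for s
  proof -
    have beta: "Beta (\<mu> + real s) (\<nu> + real j) = Beta \<mu> (\<nu> + real j) * pochhammer \<mu> s / pochhammer (t + 1) s"
      using Beta_plus_of_nat_left[OF mu nuj, of s] by (simp add: t_def algebra_simps)
    have "pochhammer t s * (t + real s) = t * pochhammer (t + 1) s"
      using pochhammer_Suc[of t s] pochhammer_rec[of t s] by simp
    then have upper: "pochhammer t s = t * pochhammer (t + 1) s / (t + real s)"
      using tpos by (simp add: field_simps)
    have cancel: "X * (t * Q / u) / P * (Bt * P / Q) = Bt * t * (X / u)"
      if "P \<noteq> 0" "Q \<noteq> 0" for X Q u P Bt :: real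
      using that by (simp add: field_simps)
    have "pochhammer \<mu> s \<noteq> 0" "pochhammer (t + 1) s \<noteq> 0"
      using mu tpos by (simp_all add: pochhammer_pos less_imp_neq[symmetric])
    then show ?thesis
      unfolding hyp_coeff_eq_binomial beta upper by (rule cancel)
  qed
  have "beta_integral \<mu> \<nu> ([:1, -1:]^j * jacobi_poly j \<mu> \<nu>) = beta_integral \<mu> (\<nu> + real j) (jacobi_poly j \<mu> \<nu>)"
    by (rule beta_integral_one_minus_power_mult)
  also have "\<dots> = Beta \<mu> (\<nu> + real j) * t * (\<Sum>s\<le>j. (-1)^s * real (j choose s) / (t + real s))"
    using mu nuj by (simp add: beta_integral_jacobi_poly t_def[symmetric] summand sum_distrib_left)
  also have "\<dots> = Beta \<mu> (\<nu> + real j) * t * (fact j / pochhammer t (Suc j))"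
    using alternating_binomial_sum_inverse[OF tpos, of j] by simp
  also have "\<dots> = Beta \<mu> (\<nu> + real j) * fact j / pochhammer (real j + \<mu> + \<nu>) j"
  proof -
    have "pochhammer t (Suc j) = t * pochhammer (real j + \<mu> + \<nu>) j"
      unfolding pochhammer_rec by (simp add: t_def)
    moreover have "pochhammer (real j + \<mu> + \<nu>) j \<noteq> 0"
      using mu nu by (simp add: pochhammer_pos less_imp_neq[symmetric])
    ultimately show ?thesis using tpos by simp
  qed
  finally show ?thesis .
qed

definition jacobi_norm :: "nat \<Rightarrow> real \<Rightarrow> real \<Rightarrow> real" where
  "jacobi_norm j \<mu> \<nu> = pochhammer (real j + \<mu> + \<nu> - 1) j / pochhammer \<mu> j * Beta \<mu> (\<nu> + real j)
      * fact j / pochhammer (real j + \<mu> + \<nu>) j"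

lemma beta_integral_jacobi_poly_square:
  assumes mu: "\<mu> > 0" and nu: "\<nu> > 0"
  shows "beta_integral \<mu> \<nu> (jacobi_poly j \<mu> \<nu> * jacobi_poly j \<mu> \<nu>) = jacobi_norm j \<mu> \<nu>"
proof (cases "j = 0")
  case True
  then show ?thesis
    using beta_integral_monom[OF mu nu, of 1 0] by (simp add: jacobi_norm_def monom_0 one_pCons)
next
  case False
  let ?M = "beta_integral \<mu> \<nu> (monom 1 j * jacobi_poly j \<mu> \<nu>)"
  have "coeff ([:1, -1::real:]^j) j = (-1)^j"
    using lead_coeff_power[of "[:1, -1::real:]" j] by (simp add: degree_power_eq)
  then have moment: "(-1)^j * ?M = Beta \<mu> (\<nu> + real j) * fact j / pochhammer (real j + \<mu> + \<nu>) j"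
    using beta_integral_mult_jacobi_poly[OF mu nu, of "[:1, -1:]^j" j]
      beta_integral_one_minus_power_mult_jacobi_poly[OF mu nu] False
    by (simp add: degree_power_eq)
  have "beta_integral \<mu> \<nu> (jacobi_poly j \<mu> \<nu> * jacobi_poly j \<mu> \<nu>) = coeff (jacobi_poly j \<mu> \<nu>) j * ?M"
    by (rule beta_integral_mult_jacobi_poly[OF mu nu degree_jacobi_poly])
  also have "\<dots> = pochhammer (real j + \<mu> + \<nu> - 1) j / pochhammer \<mu> j * ((-1)^j * ?M)"
    by (simp add: jacobi_poly_def coeff_hyp_poly hyp_coeff_eq_binomial)
  also have "\<dots> = jacobi_norm j \<mu> \<nu>"
    unfolding moment jacobi_norm_def by simp
  finally show ?thesis .
qed

theorem jacobi_poly_orthogonality: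
  assumes mu: "\<mu> > 0" and nu: "\<nu> > 0"
  shows "beta_integral \<mu> \<nu> (jacobi_poly i \<mu> \<nu> * jacobi_poly j \<mu> \<nu>) = (if i = j then jacobi_norm j \<mu> \<nu> else 0)"
proof (cases i j rule: linorder_cases)
  case less
  then show ?thesis using jacobi_poly_orthogonal[OF mu nu] degree_jacobi_poly[of i \<mu> \<nu>] by simp
next
  case greater
  then show ?thesis using jacobi_poly_orthogonal[OF mu nu, of "jacobi_poly j \<mu> \<nu>" i]
      degree_jacobi_poly[of j \<mu> \<nu>]
    by (simp add: mult.commute)
qed (simp add: beta_integral_jacobi_poly_square[OF mu nu])

lemma Gamma_plus1_pos: "(x::real) > 0 \<Longrightarrow> Gamma (x + 1) = x * Gamma x"
  by (intro Gamma_plus1) (auto elim!: nonpos_Ints_cases)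

lemma Gamma_plus_of_nat_pos:
  assumes "(x::real) > 0"
  shows "Gamma (x + real n) = Gamma x * pochhammer x n"
proof -
  have "x \<notin> \<int>\<^sub>\<le>\<^sub>0" "Gamma x > 0" using assms by (auto elim!: nonpos_Ints_cases)
  then show ?thesis using pochhammer_Gamma[of x n] by simp
qed

lemma jacobi_norm_Suc:
  assumes mu: "\<mu> > 0" and nu: "\<nu> > 0"
  shows "jacobi_norm (Suc j) \<mu> \<nu> = (real j + \<mu> + \<nu>) * (real j + 1) / \<mu>^2 * jacobi_norm j (\<mu> + 1) (\<nu> + 1)"
proof -
  define L where "L = real j + \<mu> + \<nu>"
  define y where "y = \<nu> + real j + 1"
  have Lp: "L > 0" using mu nu by (simp add: L_def)
  have "(\<mu> + y) * Beta (\<mu> + 1) y = \<mu> * Beta \<mu> y"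
    using mu by (intro Beta_plus1_left) (auto elim!: nonpos_Ints_cases)
  moreover have "\<mu> + y = L + 1" by (simp add: L_def y_def)
  ultimately have "Beta \<mu> y = (L + 1) / \<mu> * Beta (\<mu> + 1) y"
    using mu by (simp add: field_simps)
  moreover have "\<nu> + real (Suc j) = y" by (simp add: y_def)
  ultimately have beta: "Beta \<mu> (\<nu> + real (Suc j)) = (L + 1) / \<mu> * Beta (\<mu> + 1) y"
    by simp
  have p1: "pochhammer (real (Suc j) + \<mu> + \<nu> - 1) (Suc j) = L * pochhammer (L + 1) j"
    unfolding pochhammer_rec L_def by (simp add: algebra_simps)
  have p2: "pochhammer (real (Suc j) + \<mu> + \<nu>) (Suc j) = (L + 1) * pochhammer (L + 2) j"
    unfolding pochhammer_rec L_def by (simp add: algebra_simps)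
  have q1: "pochhammer (real j + (\<mu> + 1) + (\<nu> + 1) - 1) j = pochhammer (L + 1) j"
    and q2: "pochhammer (real j + (\<mu> + 1) + (\<nu> + 1)) j = pochhammer (L + 2) j"
    and q3: "Beta (\<mu> + 1) (\<nu> + 1 + real j) = Beta (\<mu> + 1) y"
    by (simp_all add: L_def y_def algebra_simps)
  obtain M where M: "L + 1 = M" by blast
  have "pochhammer (\<mu> + 1) j \<noteq> 0" "pochhammer (L + 2) j \<noteq> 0" "M \<noteq> 0" "\<mu> \<noteq> 0"
    using mu Lp M by (auto simp: pochhammer_pos less_imp_neq[symmetric])
  then show ?thesis
    unfolding jacobi_norm_def p1 pochhammer_rec[of \<mu>] p2 beta q1 q2 q3 L_def[symmetric] M
    by (simp add: field_simps power2_eq_square)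
qed

lemma jacobi_norm_shift:
  assumes mu: "\<mu> > 0" and nu: "\<nu> > 0"
  shows "jacobi_norm j (\<mu> + 1) (\<nu> + 1) * (2 * real j + \<mu> + \<nu> + 1)
       = Gamma (\<mu> + 1) * Gamma (\<nu> + 1 + real j) / Gamma (real j + \<mu> + \<nu> + 1) * fact j / pochhammer (\<mu> + 1) j"
proof -
  define L where "L = real j + \<mu> + \<nu>"
  have Lp: "L > 0" using mu nu by (simp add: L_def)
  obtain M where M: "L + 1 = M" by blast
  have f1: "pochhammer (real j + (\<mu> + 1) + (\<nu> + 1) - 1) j = pochhammer M j"
    and f2: "pochhammer (real j + (\<mu> + 1) + (\<nu> + 1)) j = pochhammer (M + 1) j"
    and f3: "2 * real j + \<mu> + \<nu> + 1 = M + real j"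
    using M by (simp_all add: L_def algebra_simps)
  have pe: "pochhammer M j * (M + real j) = M * pochhammer (M + 1) j"
    using pochhammer_Suc[of M j] pochhammer_rec[of M j] by simp
  have "Gamma (M + 1) = M * Gamma M"
    using Lp M by (intro Gamma_plus1_pos) simp
  moreover have "Gamma (\<mu> + 1 + (\<nu> + 1 + real j)) = Gamma (M + 1)"
    by (rule arg_cong[where f = Gamma]) (use M in \<open>simp add: L_def\<close>)
  ultimately have "Gamma (\<mu> + 1 + (\<nu> + 1 + real j)) = M * Gamma M" by simp
  then have beta: "Beta (\<mu> + 1) (\<nu> + 1 + real j) = Gamma (\<mu> + 1) * Gamma (\<nu> + 1 + real j) / (M * Gamma M)"
    by (simp add: Beta_def)
  have nz: "pochhammer (\<mu> + 1) j \<noteq> 0" "pochhammer (M + 1) j \<noteq> 0" "Gamma M \<noteq> 0" "M \<noteq> 0"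
    using mu Lp M by (auto simp: pochhammer_pos less_imp_neq[symmetric])
  have "jacobi_norm j (\<mu> + 1) (\<nu> + 1) * (2 * real j + \<mu> + \<nu> + 1)
      = pochhammer M j * (M + real j) / pochhammer (\<mu> + 1) j * Beta (\<mu> + 1) (\<nu> + 1 + real j)
          * fact j / pochhammer (M + 1) j"
    unfolding jacobi_norm_def f1 f2 f3 by (simp add: algebra_simps)
  also have "\<dots> = Gamma (\<mu> + 1) * Gamma (\<nu> + 1 + real j) / Gamma M * fact j / pochhammer (\<mu> + 1) j"
    unfolding pe beta using nz by (simp add: field_simps)
  finally show ?thesis using M by (simp add: L_def add_ac)
qed

definition bigJ_R :: "nat \<Rightarrow> real \<Rightarrow> real \<Rightarrow> real poly" where
  "bigJ_R n \<mu> \<nu> = jacobi_poly ((n + 1) div 2) \<mu> \<nu>"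

definition bigJ_Q_factor :: "nat \<Rightarrow> real \<Rightarrow> real \<Rightarrow> real" where
  "bigJ_Q_factor n \<mu> \<nu> = (if even n then real (n div 2) / \<mu> else - (real (n div 2) + \<mu> + \<nu>) / \<mu>)"

definition bigJ_Q :: "nat \<Rightarrow> real \<Rightarrow> real \<Rightarrow> real poly" where
  "bigJ_Q n \<mu> \<nu> = smult (bigJ_Q_factor n \<mu> \<nu>) (jacobi_poly ((n - 1) div 2) (\<mu> + 1) (\<nu> + 1))"

lemma bigJ_even_index:
  fixes x a b c :: real
  defines "z \<equiv> (1 - x^2) / (1 - c^2)" and "\<mu> \<equiv> (a + 1) / 2" and "\<nu> \<equiv> (b + 1) / 2"
  shows "bigJ (2 * j) x a b c = poly (hyp_poly j (real j + \<mu> + \<nu>) \<mu>) z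
           + real j / \<mu> / (1 + c) * (1 - x) * poly (jacobi_poly (j - 1) (\<mu> + 1) (\<nu> + 1)) z"
proof -
  have ev: "even (2 * j)" by simp
  have "- real (2 * j) / 2 = - real j" "(real (2 * j) + a + b + 2) / 2 = real j + \<mu> + \<nu>"
    "(a + 1) / 2 = \<mu>"
    by (simp_all add: \<mu>_def \<nu>_def field_simps)
  then have first: "hyp2F1 (- real (2 * j) / 2) ((real (2 * j) + a + b + 2) / 2) ((a + 1) / 2) z
      = poly (hyp_poly j (real j + \<mu> + \<nu>) \<mu>) z"
    by (simp only: hyp2F1_eq_poly_hyp_poly)
  have second: "real (2 * j) * (1 - x) / ((1 + c) * (a + 1))
        * hyp2F1 (1 - real (2 * j) / 2) ((real (2 * j) + a + b + 2) / 2) ((a + 3) / 2) z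
      = real j / \<mu> / (1 + c) * (1 - x) * poly (jacobi_poly (j - 1) (\<mu> + 1) (\<nu> + 1)) z"
  proof (cases j)
    case (Suc i)
    have "1 - real (2 * j) / 2 = - real i"
      "(real (2 * j) + a + b + 2) / 2 = real i + (\<mu> + 1) + (\<nu> + 1) - 1" "(a + 3) / 2 = \<mu> + 1"
      by (simp_all add: Suc \<mu>_def \<nu>_def field_simps)
    then have hyp: "hyp2F1 (1 - real (2 * j) / 2) ((real (2 * j) + a + b + 2) / 2) ((a + 3) / 2) z
        = poly (jacobi_poly (j - 1) (\<mu> + 1) (\<nu> + 1)) z"
      by (simp only: hyp2F1_eq_poly_hyp_poly jacobi_poly_def Suc diff_Suc_1)
    have factor: "real (2 * j) / ((1 + c) * (a + 1)) = real j / \<mu> / (1 + c)"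
      by (simp add: \<mu>_def divide_divide_eq_left mult.commute)
    show ?thesis unfolding times_divide_eq_left[symmetric] hyp factor ..
  qed simp
  show ?thesis
    unfolding bigJ_def Let_def z_def[symmetric] if_P[OF ev] first second ..
qed

lemma bigJ_odd_index:
  fixes x a b c :: real
  defines "z \<equiv> (1 - x^2) / (1 - c^2)" and "\<mu> \<equiv> (a + 1) / 2" and "\<nu> \<equiv> (b + 1) / 2"
  shows "bigJ (2 * j + 1) x a b c = poly (hyp_poly j (real j + \<mu> + \<nu>) \<mu>) z
           - (real j + \<mu> + \<nu>) / \<mu> / (1 + c) * (1 - x) * poly (jacobi_poly j (\<mu> + 1) (\<nu> + 1)) z"
proof -
  have odd: "\<not> even (2 * j + 1)" by simp
  have "- (real (2 * j + 1) - 1) / 2 = - real j" "(real (2 * j + 1) + a + b + 1) / 2 = real j + \<mu> + \<nu>"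
    "(a + 1) / 2 = \<mu>"
    by (simp_all add: \<mu>_def \<nu>_def field_simps)
  then have first: "hyp2F1 (- (real (2 * j + 1) - 1) / 2) ((real (2 * j + 1) + a + b + 1) / 2) ((a + 1) / 2) z
      = poly (hyp_poly j (real j + \<mu> + \<nu>) \<mu>) z"
    by (simp only: hyp2F1_eq_poly_hyp_poly)
  have "(real (2 * j + 1) + a + b + 3) / 2 = real j + (\<mu> + 1) + (\<nu> + 1) - 1" "(a + 3) / 2 = \<mu> + 1"
    by (simp_all add: \<mu>_def \<nu>_def field_simps)
  then have second: "hyp2F1 (- (real (2 * j + 1) - 1) / 2) ((real (2 * j + 1) + a + b + 3) / 2) ((a + 3) / 2) z
      = poly (jacobi_poly j (\<mu> + 1) (\<nu> + 1)) z"
    using \<open>- (real (2 * j + 1) - 1) / 2 = - real j\<close>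
    by (simp only: hyp2F1_eq_poly_hyp_poly jacobi_poly_def)
  have factor: "(real (2 * j + 1) + a + b + 1) / ((1 + c) * (a + 1)) = (real j + \<mu> + \<nu>) / \<mu> / (1 + c)"
  proof -
    have "real (2 * j + 1) + a + b + 1 = 2 * (real j + \<mu> + \<nu>)" "(1 + c) * (a + 1) = 2 * (\<mu> * (1 + c))"
      by (simp_all add: \<mu>_def \<nu>_def field_simps)
    then show ?thesis by (simp only: mult_divide_mult_cancel_left_if divide_divide_eq_left) simp
  qed
  show ?thesis
    unfolding bigJ_def Let_def z_def[symmetric] if_not_P[OF odd] first second
      times_divide_eq_left[symmetric] factor ..
qed

lemma bigJ_eq_parts:
  fixes x a b c :: real
  assumes "a > -1" and "1 + c \<noteq> 0"
  defines "z \<equiv> (1 - x^2) / (1 - c^2)" and "\<mu> \<equiv> (a + 1) / 2" and "\<nu> \<equiv> (b + 1) / 2"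
  shows "bigJ n x a b c = poly (bigJ_R n \<mu> \<nu>) z - z * poly (bigJ_Q n \<mu> \<nu>) z
           + (1 - x) / (1 + c) * poly (bigJ_Q n \<mu> \<nu>) z"
proof -
  have mu: "\<mu> > 0" using assms(1) by (simp add: \<mu>_def)
  obtain d where d: "1 + c = d" "d \<noteq> 0" using assms(2) by blast
  show ?thesis
  proof (cases "even n")
    case True
    then obtain j where n: "n = 2 * j" by (auto elim: evenE)
    show ?thesis
    proof (cases j)
      case (Suc i)
      have hyp: "hyp_poly j (real j + \<mu> + \<nu>) \<mu>
          = jacobi_poly j \<mu> \<nu> - smult (real j / \<mu>) (pCons 0 (jacobi_poly i (\<mu> + 1) (\<nu> + 1)))"
        using hyp_poly_contiguous_upper[OF mu, of i "real i + \<mu> + \<nu>"]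
        by (simp add: Suc jacobi_poly_def add_ac)
      show ?thesis
        unfolding n bigJ_even_index z_def[symmetric] \<mu>_def[symmetric] \<nu>_def[symmetric] hyp d(1)
        by (simp add: bigJ_R_def bigJ_Q_def bigJ_Q_factor_def Suc)
            (use mu d(2) in \<open>simp add: field_simps\<close>)
    qed (use bigJ_even_index[where j = 0] in \<open>simp add: n bigJ_R_def bigJ_Q_def bigJ_Q_factor_def\<close>)
  next
    case False
    then obtain j where n: "n = 2 * j + 1" by (auto elim: oddE)
    have hyp: "hyp_poly j (real j + \<mu> + \<nu>) \<mu>
        = jacobi_poly (Suc j) \<mu> \<nu> + smult ((real j + \<mu> + \<nu>) / \<mu>) (pCons 0 (jacobi_poly j (\<mu> + 1) (\<nu> + 1)))"
      using hyp_poly_contiguous_lower[OF mu, of j "real j + \<mu> + \<nu>"]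
      by (simp add: jacobi_poly_def add_ac)
    show ?thesis
      unfolding n bigJ_odd_index z_def[symmetric] \<mu>_def[symmetric] \<nu>_def[symmetric] hyp d(1)
      by (simp add: bigJ_R_def bigJ_Q_def bigJ_Q_factor_def)
          (use mu d(2) in \<open>simp add: field_simps\<close>)
  qed
qed

definition bigJ_parts_inner :: "nat \<Rightarrow> nat \<Rightarrow> real \<Rightarrow> real \<Rightarrow> real" where
  "bigJ_parts_inner n m \<mu> \<nu> = beta_integral \<mu> \<nu> (bigJ_R n \<mu> \<nu> * bigJ_R m \<mu> \<nu>)
     + beta_integral (\<mu> + 1) (\<nu> + 1) (bigJ_Q n \<mu> \<nu> * bigJ_Q m \<mu> \<nu>)"

lemma bigJ_parts_inner_eq:
  assumes "\<mu> > 0" "\<nu> > 0"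
  shows "bigJ_parts_inner n m \<mu> \<nu>
     = (if (n + 1) div 2 = (m + 1) div 2 then jacobi_norm ((n + 1) div 2) \<mu> \<nu> else 0)
       + bigJ_Q_factor n \<mu> \<nu> * bigJ_Q_factor m \<mu> \<nu>
         * (if (n - 1) div 2 = (m - 1) div 2 then jacobi_norm ((n - 1) div 2) (\<mu> + 1) (\<nu> + 1) else 0)"
proof -
  have "\<mu> + 1 > 0" "\<nu> + 1 > 0" using assms by simp_all
  then show ?thesis
    unfolding bigJ_parts_inner_def bigJ_R_def bigJ_Q_def
    by (simp add: jacobi_poly_orthogonality[OF assms] jacobi_poly_orthogonality beta_integral_smult mult_ac)
qed

text \<open>The only overlap between different indices, n = 2j+1 and m = 2j+2, cancels.\<close>

lemma bigJ_parts_inner_less: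
  assumes mu: "\<mu> > 0" and nu: "\<nu> > 0" and nm: "n < m"
  shows "bigJ_parts_inner n m \<mu> \<nu> = 0"
proof (cases "odd n \<and> m = n + 1")
  case True
  then obtain j where n: "n = 2 * j + 1" and m: "m = 2 * j + 2" by (auto elim!: oddE)
  have "bigJ_parts_inner n m \<mu> \<nu>
      = jacobi_norm (Suc j) \<mu> \<nu> + (- (real j + \<mu> + \<nu>) / \<mu>) * ((real j + 1) / \<mu>) * jacobi_norm j (\<mu> + 1) (\<nu> + 1)"
    by (simp add: bigJ_parts_inner_eq[OF mu nu] bigJ_Q_factor_def n m)
  also have "\<dots> = 0"
    unfolding jacobi_norm_Suc[OF mu nu] using mu by (simp add: field_simps power2_eq_square)
  finally show ?thesis .
next
  case False
  with nm have "(n + 1) div 2 \<noteq> (m + 1) div 2" by presburger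
  moreover from False nm have "(n - 1) div 2 \<noteq> (m - 1) div 2 \<or> n = 0" by presburger
  ultimately show ?thesis
    by (auto simp: bigJ_parts_inner_eq[OF mu nu] bigJ_Q_factor_def)
qed

lemma bigJ_parts_inner_commute: "bigJ_parts_inner n m \<mu> \<nu> = bigJ_parts_inner m n \<mu> \<nu>"
  unfolding bigJ_parts_inner_def by (simp add: mult.commute)

lemma hnorm_0:
  assumes "a > -1"
  shows "hnorm 0 a b = Beta ((a + 1) / 2) ((b + 1) / 2)"
proof -
  define \<mu> where "\<mu> = (a + 1) / 2"
  define \<nu> where "\<nu> = (b + 1) / 2"
  have mu: "\<mu> > 0" using assms by (simp add: \<mu>_def)
  have "(real 0 + b + 1) / 2 = \<nu>" "(real 0 + a + 3) / 2 = \<mu> + 1" "real 0 + a + 1 = 2 * \<mu>"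
    "(real 0 + a + b + 2) / 2 = \<mu> + \<nu>" "(0::nat) div 2 = 0" "(a + 1) / 2 = \<mu>"
    by (simp_all add: \<mu>_def \<nu>_def field_simps)
  then have "hnorm 0 a b = 2 * Gamma \<nu> * Gamma (\<mu> + 1) * fact 0 / (2 * \<mu> * Gamma (\<mu> + \<nu>) * (pochhammer \<mu> 0)^2)"
    unfolding hnorm_def by (simp only: even_zero if_True)
  then show ?thesis
    unfolding Gamma_plus1_pos[OF mu] Beta_def \<mu>_def[symmetric] \<nu>_def[symmetric] using mu by simp
qed

lemma hnorm_even_Suc:
  fixes a b :: real
  assumes "a > -1" "b > -1"
  defines "\<mu> \<equiv> (a + 1) / 2" and "\<nu> \<equiv> (b + 1) / 2"
  shows "hnorm (2 * Suc i) a b = (real i + 1) / \<mu>^2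
           * (Gamma (\<mu> + 1) * Gamma (\<nu> + 1 + real i) / Gamma (real i + \<mu> + \<nu> + 1) * fact i / pochhammer (\<mu> + 1) i)"
proof -
  define L where "L = real i + \<mu> + \<nu>"
  define M where "M = \<mu> + 1 + real i"
  have mu: "\<mu> > 0" and nu: "\<nu> > 0" using assms(1,2) by (simp_all add: \<mu>_def \<nu>_def)
  have M: "M > 0" using mu by (simp add: M_def)
  have "(real (2 * Suc i) + b + 1) / 2 = \<nu> + 1 + real i" "(real (2 * Suc i) + a + 3) / 2 = M + 1"
    "real (2 * Suc i) + a + 1 = 2 * M" "(real (2 * Suc i) + a + b + 2) / 2 = L + 1"
    "2 * Suc i div 2 = Suc i" "(a + 1) / 2 = \<mu>"
    by (simp_all add: M_def L_def \<mu>_def \<nu>_def field_simps)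
  then have "hnorm (2 * Suc i) a b = 2 * Gamma (\<nu> + 1 + real i) * Gamma (M + 1) * fact (Suc i)
      / (2 * M * Gamma (L + 1) * (pochhammer \<mu> (Suc i))^2)"
    unfolding hnorm_def by (simp only: even_mult_iff even_numeral simp_thms if_True)
  also have "\<dots> = 2 * Gamma (\<nu> + 1 + real i) * (M * (\<mu> * Gamma \<mu> * pochhammer (\<mu> + 1) i)) * ((real i + 1) * fact i)
      / (2 * M * Gamma (L + 1) * (\<mu> * pochhammer (\<mu> + 1) i)^2)"
  proof -
    have "Gamma M = Gamma (\<mu> + 1) * pochhammer (\<mu> + 1) i"
      using Gamma_plus_of_nat_pos[of "\<mu> + 1" i] mu by (simp add: M_def add_ac)
    then show ?thesis
      unfolding Gamma_plus1_pos[OF M] Gamma_plus1_pos[OF mu] pochhammer_rec[of \<mu>] fact_Suc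
      by (simp add: algebra_simps)
  qed
  also have "\<dots> = (real i + 1) / \<mu>^2
      * (Gamma (\<mu> + 1) * Gamma (\<nu> + 1 + real i) / Gamma (L + 1) * fact i / pochhammer (\<mu> + 1) i)"
  proof -
    have "L + 1 > 0" using mu nu by (simp add: L_def)
    then have "M \<noteq> 0" "Gamma (L + 1) \<noteq> 0" "pochhammer (\<mu> + 1) i \<noteq> 0" "\<mu> \<noteq> 0"
      using mu M by (simp_all add: pochhammer_pos less_imp_neq[symmetric])
    then show ?thesis
      unfolding Gamma_plus1_pos[OF mu] by (simp add: field_simps power2_eq_square)
  qed
  finally show ?thesis by (simp add: L_def)
qed

lemma hnorm_odd:
  fixes a b :: real
  assumes "a > -1" "b > -1"
  defines "\<mu> \<equiv> (a + 1) / 2" and "\<nu> \<equiv> (b + 1) / 2"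
  shows "hnorm (2 * j + 1) a b = (real j + \<mu> + \<nu>) / \<mu>^2
           * (Gamma (\<mu> + 1) * Gamma (\<nu> + 1 + real j) / Gamma (real j + \<mu> + \<nu> + 1) * fact j / pochhammer (\<mu> + 1) j)"
proof -
  define L where "L = real j + \<mu> + \<nu>"
  have mu: "\<mu> > 0" and nu: "\<nu> > 0" using assms(1,2) by (simp_all add: \<mu>_def \<nu>_def)
  have odd: "\<not> even (2 * j + 1)" by simp
  have "real (2 * j + 1) + a + b + 1 = 2 * L" "(real (2 * j + 1) + b + 2) / 2 = \<nu> + 1 + real j"
    "(real (2 * j + 1) + a + 2) / 2 = \<mu> + 1 + real j" "(real (2 * j + 1) + a + b + 3) / 2 = L + 1"
    "(2 * j + 1 - 1) div 2 = j" "(2 * j + 1 + 1) div 2 = Suc j" "(a + 1) / 2 = \<mu>"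
    by (simp_all add: L_def \<mu>_def \<nu>_def field_simps)
  then have "hnorm (2 * j + 1) a b = 2 * L * Gamma (\<nu> + 1 + real j) * Gamma (\<mu> + 1 + real j) * fact j
      / (2 * Gamma (L + 1) * (pochhammer \<mu> (Suc j))^2)"
    unfolding hnorm_def if_not_P[OF odd] by (simp only:)
  also have "\<dots> = L / \<mu>^2
      * (Gamma (\<mu> + 1) * Gamma (\<nu> + 1 + real j) / Gamma (L + 1) * fact j / pochhammer (\<mu> + 1) j)"
  proof -
    have "Gamma (\<mu> + 1 + real j) = Gamma (\<mu> + 1) * pochhammer (\<mu> + 1) j"
      using Gamma_plus_of_nat_pos[of "\<mu> + 1" j] mu by simp
    moreover have "L + 1 > 0" using mu nu by (simp add: L_def)
    then have "Gamma (L + 1) \<noteq> 0" "pochhammer (\<mu> + 1) j \<noteq> 0" "\<mu> \<noteq> 0"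
      using mu by (simp_all add: pochhammer_pos less_imp_neq[symmetric])
    ultimately show ?thesis
      unfolding pochhammer_rec[of \<mu>] by (simp add: field_simps power2_eq_square)
  qed
  finally show ?thesis by (simp add: L_def)
qed

lemma bigJ_parts_inner_diag:
  fixes a b :: real
  assumes "a > -1" "b > -1"
  defines "\<mu> \<equiv> (a + 1) / 2" and "\<nu> \<equiv> (b + 1) / 2"
  shows "bigJ_parts_inner n n \<mu> \<nu> = hnorm n a b"
proof -
  have mu: "\<mu> > 0" and nu: "\<nu> > 0" using assms(1,2) by (simp_all add: \<mu>_def \<nu>_def)
  note inner = bigJ_parts_inner_eq[OF mu nu] and shift = jacobi_norm_shift[OF mu nu]
  consider "n = 0" | i where "n = 2 * Suc i" | j where "n = 2 * j + 1"
    by (metis evenE oddE not0_implies_Suc mult_0_right)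
  then show ?thesis
  proof cases
    case 1
    then show ?thesis
      using hnorm_0[OF assms(1), of b] unfolding \<mu>_def[symmetric] \<nu>_def[symmetric]
      by (simp add: inner bigJ_Q_factor_def jacobi_norm_def)
  next
    case (2 i)
    have "bigJ_parts_inner n n \<mu> \<nu> = jacobi_norm (Suc i) \<mu> \<nu> + ((real i + 1) / \<mu>)^2 * jacobi_norm i (\<mu> + 1) (\<nu> + 1)"
      by (simp add: inner 2 bigJ_Q_factor_def power2_eq_square add.commute)
    also have "\<dots> = (real i + 1) / \<mu>^2 * (jacobi_norm i (\<mu> + 1) (\<nu> + 1) * (2 * real i + \<mu> + \<nu> + 1))"
      unfolding jacobi_norm_Suc[OF mu nu] using mu by (simp add: field_simps power2_eq_square)
    also have "\<dots> = hnorm n a b"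
      unfolding 2 hnorm_even_Suc[OF assms(1,2)] \<mu>_def[symmetric] \<nu>_def[symmetric] shift ..
    finally show ?thesis .
  next
    case (3 j)
    have "bigJ_parts_inner n n \<mu> \<nu>
        = jacobi_norm (Suc j) \<mu> \<nu> + (- (real j + \<mu> + \<nu>) / \<mu>)^2 * jacobi_norm j (\<mu> + 1) (\<nu> + 1)"
      by (simp add: inner 3 bigJ_Q_factor_def power2_eq_square)
    also have "\<dots> = (real j + \<mu> + \<nu>) / \<mu>^2 * (jacobi_norm j (\<mu> + 1) (\<nu> + 1) * (2 * real j + \<mu> + \<nu> + 1))"
      unfolding jacobi_norm_Suc[OF mu nu] using mu by (simp add: field_simps power2_eq_square)
    also have "\<dots> = hnorm n a b"
      unfolding 3 hnorm_odd[OF assms(1,2)] \<mu>_def[symmetric] \<nu>_def[symmetric] shift ..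
    finally show ?thesis .
  qed
qed

lemma bigJ_parts_inner_eq_hnorm:
  fixes a b :: real
  assumes "a > -1" "b > -1"
  shows "bigJ_parts_inner n m ((a + 1) / 2) ((b + 1) / 2) = (if n = m then hnorm n a b else 0)"
proof -
  have pos: "(a + 1) / 2 > 0" "(b + 1) / 2 > 0" using assms by simp_all
  show ?thesis
    using bigJ_parts_inner_diag[OF assms] bigJ_parts_inner_less[OF pos, of n m]
      bigJ_parts_inner_less[OF pos, of m n] bigJ_parts_inner_commute[of n m]
    by (auto simp: neq_iff)
qed

lemma set_integral_reflect:
  fixes f :: "real \<Rightarrow> real"
  shows "set_integrable lborel {a..b} (\<lambda>x. f (s - x)) \<longleftrightarrow> set_integrable lborel {s - b..s - a} f"
    and "(LINT x:{a..b}|lborel. f (s - x)) = (LINT x:{s - b..s - a}|lborel. f x)"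
proof -
  let ?h = "\<lambda>x. indicator {s - b..s - a} x *\<^sub>R f x"
  have e: "(\<lambda>x. ?h (s + (-1) * x)) = (\<lambda>x. indicator {a..b} x *\<^sub>R f (s - x))"
    by (auto simp: indicator_def fun_eq_iff)
  show "set_integrable lborel {a..b} (\<lambda>x. f (s - x)) \<longleftrightarrow> set_integrable lborel {s - b..s - a} f"
    unfolding set_integrable_def using lborel_integrable_real_affine_iff[of "-1" ?h s] e by simp
  show "(LINT x:{a..b}|lborel. f (s - x)) = (LINT x:{s - b..s - a}|lborel. f x)"
    unfolding set_lebesgue_integral_def using lborel_integral_real_affine[of "-1" ?h s] e by simp
qed

lemma set_integral_Un_reflect:
  fixes G :: "real \<Rightarrow> real"
  assumes "0 \<le> s" and G: "set_integrable lborel {s..t} G" and Gm: "set_integrable lborel {s..t} (\<lambda>x. G (- x))"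
  shows "(LINT x:{-t..-s} \<union> {s..t}|lborel. G x) = (LINT x:{s..t}|lborel. G x + G (- x))"
proof -
  have "set_integrable lborel {-t..-s} G" using Gm set_integral_reflect(1)[of s t G 0] by simp
  moreover have "AE x in lborel. \<not> (x \<in> {-t..-s} \<and> x \<in> {s..t})"
    using AE_lborel_singleton[of "0::real"] by eventually_elim (use \<open>0 \<le> s\<close> in auto)
  ultimately have "(LINT x:{-t..-s} \<union> {s..t}|lborel. G x)
      = (LINT x:{-t..-s}|lborel. G x) + (LINT x:{s..t}|lborel. G x)"
    using G by (intro set_integral_Un_AE) auto
  also have "(LINT x:{-t..-s}|lborel. G x) = (LINT x:{s..t}|lborel. G (- x))"
    using set_integral_reflect(2)[of s t G 0] by simp
  finally show ?thesis using set_integral_add(2)[OF G Gm] by simp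
qed

lemma set_integral_square_substitution:
  fixes \<phi> :: "real \<Rightarrow> real"
  assumes c: "\<bar>c\<bar> < 1" and phi: "set_integrable lborel {0..1} \<phi>"
  shows "set_integrable lborel {\<bar>c\<bar>..1} (\<lambda>x. \<phi> ((x^2 - c^2) / (1 - c^2)) * (2 * x / (1 - c^2)))"
    and "(LINT x:{\<bar>c\<bar>..1}|lborel. \<phi> ((x^2 - c^2) / (1 - c^2)) * (2 * x / (1 - c^2))) = (LINT t:{0..1}|lborel. \<phi> t)"
proof -
  define K where "K = 1 - c^2"
  have K: "K > 0" using c abs_square_less_1[of c] by (simp add: K_def)
  define g where "g x = (x^2 - c^2) / K" for x
  define g' where "g' x = 2 * x / K" for x
  have ga: "g \<bar>c\<bar> = 0" and gb: "g 1 = 1" using K by (simp_all add: g_def K_def)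
  have I: "set_integrable lborel {g \<bar>c\<bar>..g 1} \<phi>" using phi ga gb by simp
  have D: "\<And>x. x \<in> {\<bar>c\<bar>..1} \<Longrightarrow> (g has_real_derivative g' x) (at x)"
    unfolding g_def g'_def using K by (auto intro!: derivative_eq_intros simp: field_simps)
  have C: "continuous_on {\<bar>c\<bar>..1} g'" unfolding g'_def using K by (intro continuous_intros) auto
  have N: "\<And>x. x \<in> {\<bar>c\<bar>..1} \<Longrightarrow> g' x \<ge> 0" unfolding g'_def using K by auto
  note S = integral_substitution[OF I D C N less_imp_le[OF c]]
  show "set_integrable lborel {\<bar>c\<bar>..1} (\<lambda>x. \<phi> ((x^2 - c^2) / (1 - c^2)) * (2 * x / (1 - c^2)))"
    using S(1) by (simp add: g_def g'_def K_def)
  have "(LINT t:{0..1}|lborel. \<phi> t) = (LBINT x. \<phi> x * indicator {g \<bar>c\<bar>..g 1} x)"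
    unfolding set_lebesgue_integral_def ga gb by (simp add: mult.commute)
  also have "\<dots> = (LBINT x. \<phi> (g x) * g' x * indicator {\<bar>c\<bar>..1} x)" by (rule S(2))
  also have "\<dots> = (LINT x:{\<bar>c\<bar>..1}|lborel. \<phi> ((x^2 - c^2) / (1 - c^2)) * (2 * x / (1 - c^2)))"
    unfolding set_lebesgue_integral_def by (simp add: g_def g'_def K_def mult.commute)
  finally show "(LINT x:{\<bar>c\<bar>..1}|lborel. \<phi> ((x^2 - c^2) / (1 - c^2)) * (2 * x / (1 - c^2)))
      = (LINT t:{0..1}|lborel. \<phi> t)" ..
qed

lemma powr_mult_powr_eq_beta_density:
  assumes c: "\<bar>c\<bar> < 1" and x: "x \<in> {\<bar>c\<bar>..1}"
  shows "(1 - x^2) powr p * (x^2 - c^2) powr q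
       = (1 - c^2) powr p * (1 - c^2) powr q * beta_density (p + 1) (q + 1) ((1 - x^2) / (1 - c^2))"
proof -
  define K where "K = 1 - c^2"
  have K: "K > 0" using c abs_square_less_1[of c] by (simp add: K_def)
  define z where "z = (1 - x^2) / K"
  have e1: "1 - x^2 = K * z" and e2: "x^2 - c^2 = K * (1 - z)"
    using K by (simp_all add: z_def K_def field_simps)
  show ?thesis unfolding K_def[symmetric] z_def[symmetric] e1 e2 beta_density_def powr_mult by simp
qed

definition bigJ_weight :: "real \<Rightarrow> real \<Rightarrow> real \<Rightarrow> real \<Rightarrow> real" where
  "bigJ_weight a b c x = sgn x * (1 + x) * (x - c) * (1 - x^2) powr ((a - 1) / 2) * (x^2 - c^2) powr ((b - 1) / 2)"

lemma bigJ_weight_measurable [measurable]: "bigJ_weight a b c \<in> borel_measurable borel"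
  unfolding bigJ_weight_def by measurable

lemma set_integrable_weight_majorant:
  fixes a b c :: real
  assumes a: "a > -1" and b: "b > -1" and c: "\<bar>c\<bar> < 1"
  shows "set_integrable lborel {\<bar>c\<bar>..1} (\<lambda>x. x * ((1 - x^2) powr ((a - 1) / 2) * (x^2 - c^2) powr ((b - 1) / 2)))"
proof -
  define K where "K = 1 - c^2"
  have K: "K > 0" using c abs_square_less_1[of c] by (simp add: K_def)
  define \<mu> where "\<mu> = (a + 1) / 2"
  define \<nu> where "\<nu> = (b + 1) / 2"
  have mu: "\<mu> > 0" and nu: "\<nu> > 0" using a b by (simp_all add: \<mu>_def \<nu>_def)
  define \<phi> where "\<phi> t = beta_density \<mu> \<nu> (1 - t)" for t
  have phi: "set_integrable lborel {0..1} \<phi>"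
    unfolding \<phi>_def using set_integral_reflect(1)[of 0 1 "beta_density \<mu> \<nu>" 1] set_integral_beta_density(1)[OF mu nu]
    by simp
  define C where "C = K / 2 * (K powr (\<mu> - 1) * K powr (\<nu> - 1))"
  have eq: "x * ((1 - x^2) powr ((a - 1) / 2) * (x^2 - c^2) powr ((b - 1) / 2))
      = C * (\<phi> ((x^2 - c^2) / (1 - c^2)) * (2 * x / (1 - c^2)))" if x: "x \<in> {\<bar>c\<bar>..1}" for x
  proof -
    have am: "(a - 1) / 2 = \<mu> - 1" "(b - 1) / 2 = \<nu> - 1" by (simp_all add: \<mu>_def \<nu>_def field_simps)
    have gz: "1 - (x^2 - c^2) / K = (1 - x^2) / K" using K by (simp add: K_def field_simps)
    have "x * ((1 - x^2) powr ((a - 1) / 2) * (x^2 - c^2) powr ((b - 1) / 2))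
        = x * (K powr (\<mu> - 1) * K powr (\<nu> - 1) * beta_density \<mu> \<nu> ((1 - x^2) / K))"
      unfolding am powr_mult_powr_eq_beta_density[OF c x] K_def by simp
    also have "\<dots> = C * (\<phi> ((x^2 - c^2) / K) * (2 * x / K))"
      unfolding \<phi>_def gz C_def using K by (simp add: field_simps)
    finally show ?thesis unfolding K_def .
  qed
  show ?thesis
    using set_integrable_mult_right[OF set_integral_square_substitution(1)[OF c phi], of C]
    by (subst set_integrable_cong[OF refl refl eq]) auto
qed

lemma continuous_on_bigJ:
  assumes "a > -1" and c: "\<bar>c\<bar> < 1"
  shows "continuous_on S (\<lambda>x. bigJ n x a b c)"
proof -
  have "1 - c^2 \<noteq> 0" "1 + c \<noteq> 0" using c by (auto simp: abs_square_less_1 less_imp_neq)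
  then show ?thesis
    by (subst bigJ_eq_parts[OF assms(1)]) (auto intro!: continuous_intros)
qed

lemma bigJ_bounded:
  assumes "a > -1" and "\<bar>c\<bar> < 1"
  obtains M where "\<And>y. y \<in> {-1..1} \<Longrightarrow> \<bar>bigJ n y a b c\<bar> \<le> M"
proof -
  have "compact ((\<lambda>x. bigJ n x a b c) ` {-1..1})"
    by (intro compact_continuous_image continuous_on_bigJ[OF assms]) simp
  then have "bounded ((\<lambda>x. bigJ n x a b c) ` {-1..1})" by (rule compact_imp_bounded)
  then obtain M where "\<forall>x\<in>(\<lambda>x. bigJ n x a b c) ` {-1..1}. norm x \<le> M"
    unfolding bounded_iff by blast
  then show ?thesis using that by (metis atLeastAtMost_iff image_eqI real_norm_def)
qed

text \<open>The terms odd in x cancel when the factors of J_n(x) J_m(x) w(x) and J_n(-x) J_m(-x) w(-x)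
  are added, because x^2 = 1 - (1 - c^2) z.\<close>

lemma reflection_sum_identity:
  fixes x c z p p' q q' :: real
  assumes hz: "x^2 = 1 - (1 - c^2) * z" and c: "1 + c \<noteq> 0"
  shows "(p - z * q + (1 - x) / (1 + c) * q) * (p' - z * q' + (1 - x) / (1 + c) * q') * ((1 + x) * (x - c))
       + (p - z * q + (1 + x) / (1 + c) * q) * (p' - z * q' + (1 + x) / (1 + c) * q') * ((1 - x) * (x + c))
       = 2 * x * (1 - c) * (p * p' + z * (1 - z) * q * q')"
proof -
  define u where "u = 1 / (1 + c)"
  have u: "u * (1 + c) = 1" using c by (simp add: u_def)
  have "x * x = 1 - (1 - c * c) * z" using hz by (simp add: power2_eq_square)
  then have "(p - z * q + (1 - x) * u * q) * (p' - z * q' + (1 - x) * u * q') * ((1 + x) * (x - c))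
       + (p - z * q + (1 + x) * u * q) * (p' - z * q' + (1 + x) * u * q') * ((1 - x) * (x + c))
       = 2 * x * (1 - c) * (p * p' + z * (1 - z) * q * q')"
    using u by algebra
  then show ?thesis by (simp add: u_def)
qed

definition bigJ_parts_density :: "nat \<Rightarrow> nat \<Rightarrow> real \<Rightarrow> real \<Rightarrow> real \<Rightarrow> real" where
  "bigJ_parts_density n m \<mu> \<nu> z = poly (bigJ_R n \<mu> \<nu> * bigJ_R m \<mu> \<nu>) z * beta_density \<mu> \<nu> z
     + poly (bigJ_Q n \<mu> \<nu> * bigJ_Q m \<mu> \<nu>) z * beta_density (\<mu> + 1) (\<nu> + 1) z"

lemma set_integral_bigJ_parts_density:
  assumes "\<mu> > 0" "\<nu> > 0"
  shows "set_integrable lborel {0..1} (bigJ_parts_density n m \<mu> \<nu>)"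
    and "(LINT z:{0..1}|lborel. bigJ_parts_density n m \<mu> \<nu> z) = bigJ_parts_inner n m \<mu> \<nu>"
proof -
  note I1 = set_integrable_poly_beta_density[OF assms, of "bigJ_R n \<mu> \<nu> * bigJ_R m \<mu> \<nu>"]
  have "\<mu> + 1 > 0" "\<nu> + 1 > 0" using assms by simp_all
  note I2 = set_integrable_poly_beta_density[OF this, of "bigJ_Q n \<mu> \<nu> * bigJ_Q m \<mu> \<nu>"]
  show "set_integrable lborel {0..1} (bigJ_parts_density n m \<mu> \<nu>)"
    unfolding bigJ_parts_density_def using set_integral_add(1)[OF I1 I2] .
  show "(LINT z:{0..1}|lborel. bigJ_parts_density n m \<mu> \<nu> z) = bigJ_parts_inner n m \<mu> \<nu>"
    unfolding bigJ_parts_density_def bigJ_parts_inner_def beta_integral_def using set_integral_add(2)[OF I1 I2] .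
qed

lemma powr_weight_eq_beta_densities:
  fixes a b c x p q :: real
  assumes c: "\<bar>c\<bar> < 1" and x: "x \<in> {\<bar>c\<bar>..1}"
  defines "z \<equiv> (1 - x^2) / (1 - c^2)"
  shows "(1 - x^2) powr ((a - 1) / 2) * (x^2 - c^2) powr ((b - 1) / 2) * (p + z * (1 - z) * q)
       = (1 - c^2) powr ((a + b) / 2) / (1 - c^2)
         * (p * beta_density ((a + 1) / 2) ((b + 1) / 2) z + q * beta_density ((a + 1) / 2 + 1) ((b + 1) / 2 + 1) z)"
proof -
  define K where "K = 1 - c^2"
  have K: "K > 0" using c abs_square_less_1[of c] by (simp add: K_def)
  define \<mu> where "\<mu> = (a + 1) / 2"
  define \<nu> where "\<nu> = (b + 1) / 2"
  have z01: "z \<in> {0..1}"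
    using K x abs_le_square_iff[of c x] by (auto simp: z_def K_def field_simps power_le_one)
  have am: "(a - 1) / 2 = \<mu> - 1" "(b - 1) / 2 = \<nu> - 1" by (simp_all add: \<mu>_def \<nu>_def field_simps)
  have E: "(1 - x^2) powr ((a - 1) / 2) * (x^2 - c^2) powr ((b - 1) / 2)
      = K powr (\<mu> - 1) * K powr (\<nu> - 1) * beta_density \<mu> \<nu> z"
    unfolding am using powr_mult_powr_eq_beta_density[OF c x, of "\<mu> - 1" "\<nu> - 1"] by (simp add: K_def z_def)
  have "\<mu> - 1 + (\<nu> - 1) = (a + b) / 2 - 1" by (simp add: \<mu>_def \<nu>_def field_simps)
  then have "K powr (\<mu> - 1) * K powr (\<nu> - 1) = K powr ((a + b) / 2 - 1)"
    by (simp add: powr_add[symmetric])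
  then have KK: "K powr (\<mu> - 1) * K powr (\<nu> - 1) = K powr ((a + b) / 2) / K"
    using K by (simp add: powr_diff)
  have shift: "z * (1 - z) * beta_density \<mu> \<nu> z = beta_density (\<mu> + 1) (\<nu> + 1) z"
    using power_mult_beta_density[OF z01, of 1 \<mu> \<nu>] one_minus_power_mult_beta_density[OF z01, of 1 "\<mu> + 1" \<nu>]
    by (simp add: mult.assoc) (metis mult.left_commute)
  show ?thesis
    unfolding E K_def[symmetric] \<mu>_def[symmetric] \<nu>_def[symmetric] shift[symmetric] KK[symmetric]
    by (simp add: algebra_simps)
qed

lemma bigJ_weight_reflection_sum:
  assumes a: "a > -1" and b: "b > -1" and c: "\<bar>c\<bar> < 1" and x: "x \<in> {\<bar>c\<bar>..1}"
  shows "bigJ n x a b c * bigJ m x a b c * bigJ_weight a b c x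
         + bigJ n (-x) a b c * bigJ m (-x) a b c * bigJ_weight a b c (-x)
       = (1 - c) * (1 - c^2) powr ((a + b) / 2)
         * bigJ_parts_density n m ((a + 1) / 2) ((b + 1) / 2) ((1 - x^2) / (1 - c^2)) * (2 * x / (1 - c^2))"
proof (cases "x = 0")
  case False
  have c1: "1 + c \<noteq> 0" and K: "1 - c^2 > 0" using c abs_square_less_1[of c] by auto
  define \<mu> where "\<mu> = (a + 1) / 2"
  define \<nu> where "\<nu> = (b + 1) / 2"
  define z where "z = (1 - x^2) / (1 - c^2)"
  define E where "E = (1 - x^2) powr ((a - 1) / 2) * (x^2 - c^2) powr ((b - 1) / 2)"
  have w: "bigJ_weight a b c x = (1 + x) * (x - c) * E" "bigJ_weight a b c (-x) = (1 - x) * (x + c) * E"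
    using x False by (auto simp: bigJ_weight_def E_def algebra_simps)
  have J: "bigJ k x a b c = poly (bigJ_R k \<mu> \<nu>) z - z * poly (bigJ_Q k \<mu> \<nu>) z
        + (1 - x) / (1 + c) * poly (bigJ_Q k \<mu> \<nu>) z"
      "bigJ k (-x) a b c = poly (bigJ_R k \<mu> \<nu>) z - z * poly (bigJ_Q k \<mu> \<nu>) z
        + (1 + x) / (1 + c) * poly (bigJ_Q k \<mu> \<nu>) z" for k
    using bigJ_eq_parts[OF a c1, of k _ b] by (simp_all add: z_def \<mu>_def \<nu>_def)
  have hz: "x^2 = 1 - (1 - c^2) * z" using K by (simp add: z_def)
  have factor: "A * ((1 + x) * (x - c) * E) + B * ((1 - x) * (x + c) * E)
      = (A * ((1 + x) * (x - c)) + B * ((1 - x) * (x + c))) * E" for A B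
    by (simp add: algebra_simps)
  have "bigJ n x a b c * bigJ m x a b c * bigJ_weight a b c x
         + bigJ n (-x) a b c * bigJ m (-x) a b c * bigJ_weight a b c (-x)
      = 2 * x * (1 - c) * (E * (poly (bigJ_R n \<mu> \<nu>) z * poly (bigJ_R m \<mu> \<nu>) z
          + z * (1 - z) * (poly (bigJ_Q n \<mu> \<nu>) z * poly (bigJ_Q m \<mu> \<nu>) z)))"
    unfolding w J factor reflection_sum_identity[OF hz c1] by (simp add: algebra_simps)
  also have "\<dots> = (1 - c) * (1 - c^2) powr ((a + b) / 2) * bigJ_parts_density n m \<mu> \<nu> z * (2 * x / (1 - c^2))"
    unfolding E_def z_def powr_weight_eq_beta_densities[OF c x] bigJ_parts_density_def \<mu>_def \<nu>_def
    using K by (simp add: field_simps)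
  finally show ?thesis by (simp add: z_def \<mu>_def \<nu>_def)
qed (simp add: bigJ_weight_def)

lemma abs_bigJ_weight_le:
  fixes a b c s :: real
  assumes s: "\<bar>s\<bar> = 1" and x: "x \<in> {\<bar>c\<bar>..1}"
  shows "\<bar>bigJ_weight a b c (s * x)\<bar> \<le> 4 * (x * ((1 - x^2) powr ((a - 1) / 2) * (x^2 - c^2) powr ((b - 1) / 2)))"
proof -
  define E where "E = (1 - x^2) powr ((a - 1) / 2) * (x^2 - c^2) powr ((b - 1) / 2)"
  have "E \<ge> 0" by (simp add: E_def)
  have "x \<ge> 0" using x by (auto intro: order.trans[OF abs_ge_zero])
  then have ax: "\<bar>s * x\<bar> = x" using s by (simp add: abs_mult)
  have "s^2 = 1" using s by (simp add: abs_square_eq_1)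
  then have "\<bar>bigJ_weight a b c (s * x)\<bar> = \<bar>sgn (s * x)\<bar> * \<bar>1 + s * x\<bar> * \<bar>s * x - c\<bar> * E"
    using \<open>E \<ge> 0\<close> by (simp add: bigJ_weight_def E_def power_mult_distrib abs_mult)
  also have "\<dots> \<le> 1 * 2 * (2 * x) * E"
    using ax x \<open>E \<ge> 0\<close> by (intro mult_mono) (auto simp: abs_sgn_eq)
  finally show ?thesis by (simp add: E_def)
qed

lemma set_integrable_bigJ_product:
  fixes a b c s :: real
  assumes a: "a > -1" and b: "b > -1" and c: "\<bar>c\<bar> < 1" and s: "\<bar>s\<bar> = 1"
  shows "set_integrable lborel {\<bar>c\<bar>..1}
           (\<lambda>x. bigJ n (s * x) a b c * bigJ m (s * x) a b c * bigJ_weight a b c (s * x))"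
proof -
  obtain Mn where Mn: "\<And>y. y \<in> {-1..1} \<Longrightarrow> \<bar>bigJ n y a b c\<bar> \<le> Mn" using bigJ_bounded[OF a c] by blast
  obtain Mm where Mm: "\<And>y. y \<in> {-1..1} \<Longrightarrow> \<bar>bigJ m y a b c\<bar> \<le> Mm" using bigJ_bounded[OF a c] by blast
  define E where "E x = (1 - x^2) powr ((a - 1) / 2) * (x^2 - c^2) powr ((b - 1) / 2)" for x
  have majorant: "set_integrable lborel {\<bar>c\<bar>..1} (\<lambda>x. \<bar>Mn\<bar> * \<bar>Mm\<bar> * (4 * (x * E x)))"
    using set_integrable_weight_majorant[OF a b c] unfolding E_def
    by (intro set_integrable_mult_right)
  have [measurable]: "(\<lambda>x. bigJ k x a b c) \<in> borel_measurable borel" for k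
    using continuous_on_bigJ[OF a c, of UNIV] by (rule borel_measurable_continuous_onI)
  have bound: "norm (bigJ n (s * x) a b c * bigJ m (s * x) a b c * bigJ_weight a b c (s * x))
      \<le> norm (\<bar>Mn\<bar> * \<bar>Mm\<bar> * (4 * (x * E x)))" if x: "x \<in> {\<bar>c\<bar>..1}" for x
  proof -
    have "x \<ge> 0" using x by (auto intro: order.trans[OF abs_ge_zero])
    moreover have "s = 1 \<or> s = -1" using s by (auto simp: abs_if split: if_splits)
    ultimately have "s * x \<in> {-1..1}" "\<bar>x * E x\<bar> = x * E x" using x by (auto simp: E_def)
    then have "\<bar>bigJ n (s * x) a b c\<bar> * \<bar>bigJ m (s * x) a b c\<bar> * \<bar>bigJ_weight a b c (s * x)\<bar>
        \<le> \<bar>Mn\<bar> * \<bar>Mm\<bar> * (4 * (x * E x))"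
      using Mn Mm abs_bigJ_weight_le[OF s x, of a b] unfolding E_def by (intro mult_mono) force+
    then show ?thesis using \<open>\<bar>x * E x\<bar> = x * E x\<close> by (simp add: abs_mult)
  qed
  show ?thesis
    by (rule set_integrable_bound[OF majorant]) (use bound in \<open>auto simp: set_borel_measurable_def\<close>)
qed

lemma set_integral_bigJ_reflection_sum:
  fixes a b c :: real
  assumes a: "a > -1" and b: "b > -1" and c: "\<bar>c\<bar> < 1"
  shows "(LINT x : {\<bar>c\<bar>..1} | lborel. bigJ n x a b c * bigJ m x a b c * bigJ_weight a b c x
            + bigJ n (-x) a b c * bigJ m (-x) a b c * bigJ_weight a b c (-x))
       = (1 - c) * (1 - c^2) powr ((a + b) / 2) * bigJ_parts_inner n m ((a + 1) / 2) ((b + 1) / 2)"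
proof -
  define K where "K = 1 - c^2"
  have K: "K > 0" using c abs_square_less_1[of c] by (simp add: K_def)
  define D where "D = bigJ_parts_density n m ((a + 1) / 2) ((b + 1) / 2)"
  define H where "H = (\<lambda>t. D (1 - t))"
  have pos: "(a + 1) / 2 > 0" "(b + 1) / 2 > 0" using a b by simp_all
  have H: "set_integrable lborel {0..1} H" "(LINT t:{0..1}|lborel. H t) = bigJ_parts_inner n m ((a + 1) / 2) ((b + 1) / 2)"
    using set_integral_reflect[of 0 1 D 1] set_integral_bigJ_parts_density[OF pos, of n m]
    by (simp_all add: H_def D_def)
  have "bigJ n x a b c * bigJ m x a b c * bigJ_weight a b c x + bigJ n (-x) a b c * bigJ m (-x) a b c * bigJ_weight a b c (-x)
      = (1 - c) * K powr ((a + b) / 2) * (H ((x^2 - c^2) / K) * (2 * x / K))" if x: "x \<in> {\<bar>c\<bar>..1}" for x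
  proof -
    have "1 - (x^2 - c^2) / K = (1 - x^2) / K" using K by (simp add: K_def field_simps)
    then show ?thesis
      by (subst bigJ_weight_reflection_sum[OF a b c x]) (simp add: H_def D_def K_def mult_ac)
  qed
  then have "(LINT x : {\<bar>c\<bar>..1} | lborel. bigJ n x a b c * bigJ m x a b c * bigJ_weight a b c x
            + bigJ n (-x) a b c * bigJ m (-x) a b c * bigJ_weight a b c (-x))
      = (LINT x : {\<bar>c\<bar>..1} | lborel. (1 - c) * K powr ((a + b) / 2) * (H ((x^2 - c^2) / K) * (2 * x / K)))"
    by (intro set_lebesgue_integral_cong) auto
  also have "\<dots> = (1 - c) * K powr ((a + b) / 2) * bigJ_parts_inner n m ((a + 1) / 2) ((b + 1) / 2)"
    unfolding set_integral_mult_right K_def set_integral_square_substitution(2)[OF c H(1)] H(2) ..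
  finally show ?thesis by (simp add: K_def)
qed

theorem bigJ_orthogonality:
  fixes a b c :: real
  assumes a: "a > -1" and b: "b > -1" and c: "\<bar>c\<bar> < 1"
  shows "(LINT x : {-1..-\<bar>c\<bar>} \<union> {\<bar>c\<bar>..1} | lborel. bigJ n x a b c * bigJ m x a b c * bigJ_weight a b c x)
       = (if n = m then (1 - c^2) powr ((a + b + 2) / 2) / (1 + c) * hnorm n a b else 0)"
proof -
  define K where "K = 1 - c^2"
  have K: "K > 0" using c abs_square_less_1[of c] by (simp add: K_def)
  have "(LINT x : {-1..-\<bar>c\<bar>} \<union> {\<bar>c\<bar>..1} | lborel. bigJ n x a b c * bigJ m x a b c * bigJ_weight a b c x)
      = (1 - c) * K powr ((a + b) / 2) * bigJ_parts_inner n m ((a + 1) / 2) ((b + 1) / 2)"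
    unfolding K_def set_integral_bigJ_reflection_sum[OF a b c, symmetric]
    using set_integrable_bigJ_product[OF a b c, of 1 n m] set_integrable_bigJ_product[OF a b c, of "-1" n m]
    by (intro set_integral_Un_reflect) simp_all
  also have "(1 - c) * K powr ((a + b) / 2) = (1 - c^2) powr ((a + b + 2) / 2) / (1 + c)"
  proof -
    have "K powr ((a + b + 2) / 2) = K powr ((a + b) / 2) * K"
      using K by (simp add: add_divide_distrib powr_add)
    moreover have "K = (1 - c) * (1 + c)" by (simp add: K_def power2_eq_square algebra_simps)
    moreover have "1 + c \<noteq> 0" using c by auto
    ultimately show ?thesis by (simp add: K_def[symmetric])
  qed
  finally show ?thesis by (simp add: bigJ_parts_inner_eq_hnorm[OF a b])
qed

lemma mem_domX_scale:
  assumes "y \<noteq> 0"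
  shows "y * u \<in> domX \<delta> y \<longleftrightarrow> u \<in> {-1..-\<bar>\<delta> / y\<bar>} \<union> {\<bar>\<delta> / y\<bar>..1}"
proof -
  have Y: "\<bar>y\<bar> > 0" using assms by simp
  have "\<bar>\<delta>\<bar> \<le> \<bar>y\<bar> * \<bar>u\<bar> \<longleftrightarrow> \<bar>\<delta>\<bar> / \<bar>y\<bar> \<le> \<bar>u\<bar>" using Y by (simp add: field_simps)
  moreover have "\<bar>y\<bar> * \<bar>u\<bar> \<le> \<bar>y\<bar> \<longleftrightarrow> \<bar>u\<bar> \<le> 1" using Y by simp
  moreover have "x \<in> domX \<delta> y \<longleftrightarrow> \<bar>\<delta>\<bar> \<le> \<bar>x\<bar> \<and> \<bar>x\<bar> \<le> \<bar>y\<bar>" for x unfolding domX_def by auto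
  moreover have "u \<in> {-1..-\<bar>\<delta> / y\<bar>} \<union> {\<bar>\<delta> / y\<bar>..1} \<longleftrightarrow> \<bar>\<delta> / y\<bar> \<le> \<bar>u\<bar> \<and> \<bar>u\<bar> \<le> 1"
    using abs_ge_zero[of "\<delta> / y"] by (auto simp del: abs_divide simp: abs_if)
  ultimately show ?thesis by (simp add: abs_mult abs_divide)
qed

lemma set_integral_domX_scale:
  fixes f :: "real \<Rightarrow> real"
  assumes y: "y \<noteq> 0"
  shows "(LINT x : domX \<delta> y | lborel. f x)
       = \<bar>y\<bar> * (LINT u : {-1..-\<bar>\<delta> / y\<bar>} \<union> {\<bar>\<delta> / y\<bar>..1} | lborel. f (y * u))"
proof -
  let ?D = "{-1..-\<bar>\<delta> / y\<bar>} \<union> {\<bar>\<delta> / y\<bar>..1}"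
  have scaled: "(\<lambda>u. indicator (domX \<delta> y) (0 + y * u) *\<^sub>R f (0 + y * u)) = (\<lambda>u. indicator ?D u *\<^sub>R f (y * u))"
  proof
    fix u
    show "indicator (domX \<delta> y) (0 + y * u) *\<^sub>R f (0 + y * u) = indicator ?D u *\<^sub>R f (y * u)"
      using mem_domX_scale[OF y, of u \<delta>] by (simp add: indicator_def)
  qed
  have "(LINT x : domX \<delta> y | lborel. f x) = (\<integral>x. indicator (domX \<delta> y) x *\<^sub>R f x \<partial>lborel)"
    unfolding set_lebesgue_integral_def ..
  also have "\<dots> = \<bar>y\<bar> *\<^sub>R (\<integral>u. indicator (domX \<delta> y) (0 + y * u) *\<^sub>R f (0 + y * u) \<partial>lborel)"
    by (rule lborel_integral_real_affine[OF y])
  also have "\<dots> = \<bar>y\<bar> * (LINT u : ?D | lborel. f (y * u))"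
    unfolding scaled set_lebesgue_integral_def by simp
  finally show ?thesis .
qed

lemma weightW_scale:
  assumes "y \<noteq> 0"
  shows "weightW \<alpha> \<beta> \<gamma> \<delta> (y * u) y
       = \<bar>y\<bar> powr (\<beta> + \<gamma>) * (1 + y) * (1 - y^2) powr ((\<alpha> - 1) / 2) * bigJ_weight \<gamma> \<beta> (\<delta> / y) u"
proof -
  have "sgn (y * u * y) = sgn u" "y * u / y = u" "(y * u - \<delta>) / y = u - \<delta> / y" "(y * u)^2 / y^2 = u^2"
    "((y * u)^2 - \<delta>^2) / y^2 = u^2 - (\<delta> / y)^2"
    using assms by (simp_all add: sgn_mult field_simps power_mult_distrib)
  then show ?thesis unfolding weightW_def bigJ_weight_def by (simp add: mult_ac)
qed

lemma rho_square:
  assumes "y \<noteq> 0"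
  shows "(rho \<delta> k y)^2 = (if even k then (y^2 - \<delta>^2)^k else (y^2 - \<delta>^2)^(k - 1) * (y + \<delta>)^2)"
proof -
  define A where "A = 1 - \<delta>^2 / y^2"
  have q: "y^2 * A = y^2 - \<delta>^2" and p: "y * (1 + \<delta> / y) = y + \<delta>"
    using assms by (simp_all add: A_def field_simps)
  show ?thesis
  proof (cases "even k")
    case True
    then obtain j where k: "k = 2 * j" by (auto elim: evenE)
    have "(rho \<delta> k y)^2 = (y^2)^k * A^(2 * j)"
      using True by (simp add: rho_def A_def k power_mult_distrib mult.commute flip: power_mult)
    also have "\<dots> = (y^2 * A)^k" by (simp add: k power_mult_distrib)
    finally show ?thesis using True q by simp
  next
    case False
    then obtain j where k: "k = 2 * j + 1" by (auto elim: oddE)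
    have "(rho \<delta> k y)^2 = (y^2)^k * A^(2 * j) * (1 + \<delta> / y)^2"
      using False by (simp add: rho_def A_def k power_mult_distrib mult.commute flip: power_mult)
    also have "\<dots> = (y^2 * A)^(k - 1) * (y * (1 + \<delta> / y))^2"
      by (simp add: k power_mult_distrib power_add power_mult[symmetric] mult_ac)
    finally show ?thesis using False q p by simp
  qed
qed

lemma one_minus_square_div_powr:
  fixes \<delta> y s :: real
  assumes yd: "\<bar>\<delta>\<bar> < \<bar>y\<bar>"
  shows "(1 - (\<delta> / y)^2) powr ((s + 2) / 2) = (y^2 - \<delta>^2) powr ((s + 2) / 2) / (\<bar>y\<bar> powr s * \<bar>y\<bar>^2)"
proof -
  have Y: "\<bar>y\<bar> > 0" using yd abs_ge_zero[of \<delta>] by linarith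
  have sq: "\<bar>y\<bar>^2 = \<bar>y\<bar> powr 2" using Y by (simp add: powr_realpow)
  have "(\<bar>y\<bar>^2) powr ((s + 2) / 2) = \<bar>y\<bar> powr (2 * ((s + 2) / 2))"
    unfolding sq by (rule powr_powr)
  also have "\<dots> = \<bar>y\<bar> powr s * \<bar>y\<bar> powr 2"
    unfolding powr_add[symmetric] by (rule arg_cong[where f = "(powr) \<bar>y\<bar>"]) simp
  finally have "(\<bar>y\<bar>^2) powr ((s + 2) / 2) = \<bar>y\<bar> powr s * \<bar>y\<bar>^2" unfolding sq .
  moreover have "1 - (\<delta> / y)^2 = (y^2 - \<delta>^2) / \<bar>y\<bar>^2" using Y by (simp add: field_simps)
  moreover have "y^2 - \<delta>^2 > 0" using yd abs_le_square_iff[of y \<delta>] by simp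
  ultimately show ?thesis by (simp add: powr_divide)
qed

lemma rho_square_mult_powr:
  fixes \<delta> y s :: real
  assumes y: "y \<noteq> 0" and yd: "\<bar>\<delta>\<bar> < \<bar>y\<bar>"
  shows "(rho \<delta> k y)^2 * (y^2 - \<delta>^2) powr ((s + 2) / 2)
       = (y^2 - \<delta>^2) powr ((2 * real k + s) / 2) * (if even k then y^2 - \<delta>^2 else (y + \<delta>)^2)"
proof -
  define Q where "Q = y^2 - \<delta>^2"
  have Q: "Q > 0" using yd abs_le_square_iff[of y \<delta>] by (simp add: Q_def)
  show ?thesis
  proof (cases "even k")
    case True
    have "Q powr real k * Q powr ((s + 2) / 2) = Q powr ((2 * real k + s) / 2 + 1)"
      unfolding powr_add[symmetric] by (rule arg_cong[where f = "(powr) Q"]) (simp add: field_simps)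
    also have "\<dots> = Q powr ((2 * real k + s) / 2) * Q" using Q by (simp add: powr_add)
    finally show ?thesis using True Q by (simp add: rho_square[OF y] Q_def[symmetric] powr_realpow)
  next
    case False
    then have "k \<ge> 1" by presburger
    have "Q powr real (k - 1) * Q powr ((s + 2) / 2) = Q powr ((2 * real k + s) / 2)"
      unfolding powr_add[symmetric]
      by (rule arg_cong[where f = "(powr) Q"]) (use \<open>k \<ge> 1\<close> in \<open>simp add: field_simps of_nat_diff\<close>)
    then show ?thesis using False Q by (simp add: rho_square[OF y] Q_def[symmetric] powr_realpow mult_ac)
  qed
qed

lemma power2_neg_one_power_mult: "((-1)^k * x)^2 = (x::real)^2"
  by (simp add: power_mult_distrib power_even_eq[symmetric] power_mult[symmetric])

text \<open>The factors depending only on y, together with the normalisation of the inner integral,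
  assemble into the univariate weight in y.\<close>

lemma radial_weight_collapse:
  assumes y: "y \<noteq> 0" and yd: "\<bar>\<delta>\<bar> < \<bar>y\<bar>"
  shows "\<bar>y\<bar> * (rho \<delta> k y)^2 * (\<bar>y\<bar> powr (\<beta> + \<gamma>) * (1 + y) * (1 - y^2) powr ((\<alpha> - 1) / 2))
         * ((1 - (\<delta> / y)^2) powr ((\<gamma> + \<beta> + 2) / 2) / (1 + \<delta> / y))
       = bigJ_weight \<alpha> (2 * real k + \<beta> + \<gamma> + 1) ((-1)^k * \<delta>) y"
proof -
  define Q where "Q = y^2 - \<delta>^2"
  define s where "s = \<beta> + \<gamma>"
  define R where "R = (1 + y) * (1 - y^2) powr ((\<alpha> - 1) / 2)"
  define P where "P = Q powr ((2 * real k + s) / 2)"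
  have yd0: "y + \<delta> \<noteq> 0" using yd by auto
  have cancel: "A * r * (B * R) * (X / (B * A^2) / D) = r * X * R / (A * D)"
    if "A \<noteq> 0" "B \<noteq> 0" "D \<noteq> 0" for A B D R X r :: real
    using that by (simp add: field_simps power2_eq_square)
  have nz: "\<bar>y\<bar> \<noteq> 0" "\<bar>y\<bar> powr s \<noteq> 0" "1 + \<delta> / y \<noteq> 0" using y yd0 by (simp_all add: field_simps)
  have "\<bar>y\<bar> * (1 + \<delta> / y) = sgn y * (y + \<delta>)" using y by (simp add: sgn_real_def field_simps)
  then have lhs: "\<bar>y\<bar> * (rho \<delta> k y)^2 * (\<bar>y\<bar> powr s * R) * ((1 - (\<delta> / y)^2) powr ((s + 2) / 2) / (1 + \<delta> / y))
      = P * (if even k then Q else (y + \<delta>)^2) * R / (sgn y * (y + \<delta>))"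
    unfolding one_minus_square_div_powr[OF yd] cancel[OF nz] rho_square_mult_powr[OF y yd] P_def Q_def
    by simp
  have Q: "Q = (y - \<delta>) * (y + \<delta>)" by (simp add: Q_def power2_eq_square algebra_simps)
  have "sgn y = 1 \<or> sgn y = -1" using y by (simp add: sgn_real_def)
  then have rhs: "P * (if even k then Q else (y + \<delta>)^2) * R / (sgn y * (y + \<delta>))
      = sgn y * (1 + y) * (y - (-1)^k * \<delta>) * (1 - y^2) powr ((\<alpha> - 1) / 2) * P"
    unfolding Q using yd0 by (cases "even k") (auto simp: R_def field_simps power2_eq_square)
  have weight: "bigJ_weight \<alpha> (2 * real k + \<beta> + \<gamma> + 1) ((-1)^k * \<delta>) y
      = sgn y * (1 + y) * (y - (-1)^k * \<delta>) * (1 - y^2) powr ((\<alpha> - 1) / 2) * P"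
    unfolding bigJ_weight_def P_def Q_def s_def power2_neg_one_power_mult by (simp add: add_ac)
  have "(\<gamma> + \<beta> + 2) / 2 = (s + 2) / 2" by (simp add: s_def)
  then have "\<bar>y\<bar> * (rho \<delta> k y)^2 * (\<bar>y\<bar> powr (\<beta> + \<gamma>) * (1 + y) * (1 - y^2) powr ((\<alpha> - 1) / 2))
         * ((1 - (\<delta> / y)^2) powr ((\<gamma> + \<beta> + 2) / 2) / (1 + \<delta> / y))
      = \<bar>y\<bar> * (rho \<delta> k y)^2 * (\<bar>y\<bar> powr s * R) * ((1 - (\<delta> / y)^2) powr ((s + 2) / 2) / (1 + \<delta> / y))"
    unfolding s_def[symmetric] R_def by (simp only: mult.assoc)
  then show ?thesis unfolding lhs rhs weight .
qed

lemma set_integral_finite_lborel: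
  fixes f :: "real \<Rightarrow> real"
  assumes "finite A"
  shows "(LINT x : A | lborel. f x) = 0"
  unfolding set_lebesgue_integral_def
  by (rule integral_eq_zero_AE)
     (use AE_not_in[OF finite_imp_null_set_lborel[OF assms]] in \<open>eventually_elim, simp\<close>)

lemma inner_integral_bigJ2_interior:
  fixes \<alpha> \<beta> \<gamma> \<delta> y :: real
  assumes "\<beta> > -1" and "\<gamma> > -1" and yd: "\<bar>\<delta>\<bar> < \<bar>y\<bar>"
  shows "(LINT x : domX \<delta> y | lborel. bigJ2 \<alpha> \<beta> \<gamma> \<delta> n k x y * bigJ2 \<alpha> \<beta> \<gamma> \<delta> m l x y * weightW \<alpha> \<beta> \<gamma> \<delta> x y)
       = (if k = l then hnorm k \<gamma> \<beta> * (bigJ (n - k) y \<alpha> (2 * real k + \<beta> + \<gamma> + 1) ((-1)^k * \<delta>)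
              * bigJ (m - k) y \<alpha> (2 * real k + \<beta> + \<gamma> + 1) ((-1)^k * \<delta>)
              * bigJ_weight \<alpha> (2 * real k + \<beta> + \<gamma> + 1) ((-1)^k * \<delta>) y) else 0)"
proof -
  have y0: "y \<noteq> 0" using yd by auto
  have c: "\<bar>\<delta> / y\<bar> < 1" using yd y0 by (simp add: abs_divide field_simps)
  define A where "A i j = bigJ (i - j) y \<alpha> (2 * real j + \<beta> + \<gamma> + 1) ((-1)^j * \<delta>) * rho \<delta> j y" for i j
  define W0 where "W0 = \<bar>y\<bar> powr (\<beta> + \<gamma>) * (1 + y) * (1 - y^2) powr ((\<alpha> - 1) / 2)"
  have integrand: "bigJ2 \<alpha> \<beta> \<gamma> \<delta> n k (y * u) y * bigJ2 \<alpha> \<beta> \<gamma> \<delta> m l (y * u) y * weightW \<alpha> \<beta> \<gamma> \<delta> (y * u) y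
      = A n k * A m l * W0 * (bigJ k u \<gamma> \<beta> (\<delta> / y) * bigJ l u \<gamma> \<beta> (\<delta> / y) * bigJ_weight \<gamma> \<beta> (\<delta> / y) u)" for u
    unfolding bigJ2_def weightW_scale[OF y0] using y0 by (simp add: A_def W0_def mult_ac)
  have "(LINT x : domX \<delta> y | lborel. bigJ2 \<alpha> \<beta> \<gamma> \<delta> n k x y * bigJ2 \<alpha> \<beta> \<gamma> \<delta> m l x y * weightW \<alpha> \<beta> \<gamma> \<delta> x y)
      = \<bar>y\<bar> * (A n k * A m l * W0) * (if k = l then (1 - (\<delta> / y)^2) powr ((\<gamma> + \<beta> + 2) / 2) / (1 + \<delta> / y) * hnorm k \<gamma> \<beta> else 0)"
    unfolding set_integral_domX_scale[OF y0] integrand set_integral_mult_right bigJ_orthogonality[OF assms(2,1) c]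
    by (simp only: mult.assoc)
  also have "\<dots> = (if k = l then hnorm k \<gamma> \<beta> * (bigJ (n - k) y \<alpha> (2 * real k + \<beta> + \<gamma> + 1) ((-1)^k * \<delta>)
              * bigJ (m - k) y \<alpha> (2 * real k + \<beta> + \<gamma> + 1) ((-1)^k * \<delta>)
              * bigJ_weight \<alpha> (2 * real k + \<beta> + \<gamma> + 1) ((-1)^k * \<delta>) y) else 0)"
  proof (cases "k = l")
    case kl: True
    have "\<bar>y\<bar> * (A n k * A m l * W0) * ((1 - (\<delta> / y)^2) powr ((\<gamma> + \<beta> + 2) / 2) / (1 + \<delta> / y) * hnorm k \<gamma> \<beta>)
        = hnorm k \<gamma> \<beta> * (bigJ (n - k) y \<alpha> (2 * real k + \<beta> + \<gamma> + 1) ((-1)^k * \<delta>)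
            * bigJ (m - k) y \<alpha> (2 * real k + \<beta> + \<gamma> + 1) ((-1)^k * \<delta>)
            * (\<bar>y\<bar> * (rho \<delta> k y)^2 * W0 * ((1 - (\<delta> / y)^2) powr ((\<gamma> + \<beta> + 2) / 2) / (1 + \<delta> / y))))"
      unfolding A_def kl[symmetric] by (simp add: power2_eq_square mult_ac)
    also have "\<dots> = hnorm k \<gamma> \<beta> * (bigJ (n - k) y \<alpha> (2 * real k + \<beta> + \<gamma> + 1) ((-1)^k * \<delta>)
            * bigJ (m - k) y \<alpha> (2 * real k + \<beta> + \<gamma> + 1) ((-1)^k * \<delta>)
            * bigJ_weight \<alpha> (2 * real k + \<beta> + \<gamma> + 1) ((-1)^k * \<delta>) y)"
      unfolding W0_def radial_weight_collapse[OF y0 yd] ..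
    finally show ?thesis using kl by simp
  qed simp
  finally show ?thesis .
qed

lemma inner_integral_bigJ2:
  fixes \<alpha> \<beta> \<gamma> \<delta> y :: real
  assumes "\<beta> > -1" and "\<gamma> > -1" and y: "y \<in> domY \<delta>"
  shows "(LINT x : domX \<delta> y | lborel. bigJ2 \<alpha> \<beta> \<gamma> \<delta> n k x y * bigJ2 \<alpha> \<beta> \<gamma> \<delta> m l x y * weightW \<alpha> \<beta> \<gamma> \<delta> x y)
       = (if k = l then hnorm k \<gamma> \<beta> * (bigJ (n - k) y \<alpha> (2 * real k + \<beta> + \<gamma> + 1) ((-1)^k * \<delta>)
              * bigJ (m - k) y \<alpha> (2 * real k + \<beta> + \<gamma> + 1) ((-1)^k * \<delta>)
              * bigJ_weight \<alpha> (2 * real k + \<beta> + \<gamma> + 1) ((-1)^k * \<delta>) y) else 0)"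
proof (cases "\<bar>\<delta>\<bar> < \<bar>y\<bar>")
  case True
  then show ?thesis by (rule inner_integral_bigJ2_interior[OF assms(1,2)])
next
  case False
  then have yd: "\<bar>y\<bar> = \<bar>\<delta>\<bar>" using y by (auto simp: domY_def)
  then have "domX \<delta> y = {-\<bar>\<delta>\<bar>, \<bar>\<delta>\<bar>}" unfolding domX_def by auto
  moreover have "y^2 = ((-1)^k * \<delta>)^2"
    using power2_abs[of y] power2_abs[of \<delta>] yd by (simp add: power2_neg_one_power_mult)
  ultimately show ?thesis by (simp add: set_integral_finite_lborel bigJ_weight_def)
qed

lemma outer_integral_bigJ:
  fixes \<alpha> \<beta> \<gamma> \<delta> :: real
  assumes "\<alpha> > -1" and "2 * real k + \<beta> + \<gamma> + 1 > -1" and "\<bar>\<delta>\<bar> < 1"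
  shows "(LINT y : domY \<delta> | lborel. bigJ i y \<alpha> (2 * real k + \<beta> + \<gamma> + 1) ((-1)^k * \<delta>)
            * bigJ j y \<alpha> (2 * real k + \<beta> + \<gamma> + 1) ((-1)^k * \<delta>)
            * bigJ_weight \<alpha> (2 * real k + \<beta> + \<gamma> + 1) ((-1)^k * \<delta>) y)
       = (if i = j then (1 - \<delta>^2) powr ((2 * real k + \<alpha> + \<beta> + \<gamma> + 3) / 2) / (1 + (-1)^k * \<delta>)
            * hnorm i \<alpha> (2 * real k + \<beta> + \<gamma> + 1) else 0)"
proof -
  have abs_eq: "\<bar>(-1)^k * \<delta>\<bar> = \<bar>\<delta>\<bar>" by (simp add: abs_mult)
  have dom: "domY \<delta> = {-1..-\<bar>(-1)^k * \<delta>\<bar>} \<union> {\<bar>(-1)^k * \<delta>\<bar>..1}" unfolding domY_def abs_eq ..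
  have c: "\<bar>(-1)^k * \<delta>\<bar> < 1" using assms(3) abs_eq by simp
  have ex: "(\<alpha> + (2 * real k + \<beta> + \<gamma> + 1) + 2) / 2 = (2 * real k + \<alpha> + \<beta> + \<gamma> + 3) / 2"
    by (simp add: field_simps)
  show ?thesis unfolding dom bigJ_orthogonality[OF assms(1,2) c] power2_neg_one_power_mult ex ..
qed

theorem proposition2p1:
  fixes \<alpha> \<beta> \<gamma> \<delta> :: real and n k m l :: nat
  assumes "\<alpha> > -1" and "\<beta> > -1" and "\<gamma> > -1" and "\<bar>\<delta>\<bar> < 1"
    and "k \<le> n" and "l \<le> m"
  shows "(LINT y : domY \<delta> | lborel.
            (LINT x : domX \<delta> y | lborel.
               bigJ2 \<alpha> \<beta> \<gamma> \<delta> n k x y * bigJ2 \<alpha> \<beta> \<gamma> \<delta> m l x y * weightW \<alpha> \<beta> \<gamma> \<delta> x y))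
         = Hnorm \<alpha> \<beta> \<gamma> \<delta> n k * (if k = l then 1 else 0) * (if n = m then 1 else 0)"
proof -
  let ?b = "2 * real k + \<beta> + \<gamma> + 1" and ?c = "(-1)^k * \<delta>"
  have inner: "(LINT y : domY \<delta> | lborel.
            (LINT x : domX \<delta> y | lborel.
               bigJ2 \<alpha> \<beta> \<gamma> \<delta> n k x y * bigJ2 \<alpha> \<beta> \<gamma> \<delta> m l x y * weightW \<alpha> \<beta> \<gamma> \<delta> x y))
      = (LINT y : domY \<delta> | lborel. if k = l then hnorm k \<gamma> \<beta>
            * (bigJ (n - k) y \<alpha> ?b ?c * bigJ (m - k) y \<alpha> ?b ?c * bigJ_weight \<alpha> ?b ?c y) else 0)"
    by (rule set_lebesgue_integral_cong) (simp_all add: inner_integral_bigJ2[OF assms(2,3)] domY_def)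
  show ?thesis
  proof (cases "k = l")
    case True
    have "?b > -1" using assms(2,3) by simp
    moreover have "n - k = m - k \<longleftrightarrow> n = m" using assms(5,6) True by auto
    ultimately show ?thesis
      unfolding inner using True outer_integral_bigJ[OF assms(1) _ assms(4), of k \<beta> \<gamma> "n - k" "m - k"]
      by (simp add: Hnorm_def add_ac)
  qed (simp add: inner)
qed

end
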